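(* For any natural number $n \geq 1$, $\{\omega \cdot 2, \omega^\star \cdot 2\} \leq_c \{\omega^2 \cdot n, (\omega^2)^\star \cdot n\}$.
   Context: Structures have domains contained in $\omega$. For countable structures $\mathcal{A},\mathcal{B}$, the class $\{\mathcal{A},\mathcal{B}\}$ denotes the class of all structures (with domain $\subseteq\omega$) isomorphic to $\mathcal{A}$ or to $\mathcal{B}$. Linear orders are in the language $\{<\}$; $L^\star$ is the reverse of a linear order $L$; $\omega\cdot 2$, $\omega^2\cdot n$ are ordinal order types. An enumeration operator $\Gamma$ is a c.e. set of pairs $(\alpha,\varphi)$ with $\alpha$ a finite set of basic (atomic or negated atomic) sentences of the input language with constants from $\omega$ and $\varphi$ a basic sentence of the output language with constants from $\omega$; $\Gamma(X)=\{\varphi : (\alpha,\varphi)\in\Gamma,\ \alpha\subseteq X\}$. $\Gamma$ is a computable embedding of $\mathcal{K}_0$ into $\mathcal{K}_1$ ($\mathcal{K}_0\leq_c\mathcal{K}_1$) if for every $\mathcal{A}\in\mathcal{K}_0$, $\Gamma$ applied to the atomic diagram of $\mathcal{A}$ is the atomic diagram of a structure $\Gamma(\mathcal{A})\in\mathcal{K}_1$, and for all $\mathcal{A},\mathcal{B}\in\mathcal{K}_0$, $\mathcal{A}\cong\mathcal{B}$ iff $\Gamma(\mathcal{A})\cong\Gamma(\mathcal{B})$. *)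

theory Defs
  imports Main "HOL-Library.Nat_Bijection"
begin

datatype recf = Zero | Succ | Proj nat | Comp recf "recf list" | Prim recf recf | Mn recf

inductive eval :: "recf \<Rightarrow> nat list \<Rightarrow> nat \<Rightarrow> bool" where
  zero: "eval Zero xs 0"
| succ: "eval Succ (x # xs) (Suc x)"
| proj: "i < length xs \<Longrightarrow> eval (Proj i) xs (xs ! i)"
| comp: "length ys = length gs \<Longrightarrow> (\<forall>i < length gs. eval (gs ! i) xs (ys ! i))
          \<Longrightarrow> eval f ys z \<Longrightarrow> eval (Comp f gs) xs z"
| prim0: "eval f xs y \<Longrightarrow> eval (Prim f g) (0 # xs) y"
| primS: "eval (Prim f g) (n # xs) y \<Longrightarrow> eval g (n # y # xs) z
          \<Longrightarrow> eval (Prim f g) (Suc n # xs) z"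
| mn: "eval f (n # xs) 0 \<Longrightarrow> (\<forall>m < n. \<exists>y. eval f (m # xs) (Suc y))
          \<Longrightarrow> eval (Mn f) xs n"

definition ce :: "nat set \<Rightarrow> bool" where
  "ce A \<longleftrightarrow> (\<exists>c. A = {x. \<exists>y. eval c [x] y})"

datatype sent = Eq nat nat | Lt nat nat

type_synonym lit = "bool \<times> sent"   \<comment> \<open>(True, s) = s, (False, s) = negation of s\<close>

fun sent_code :: "sent \<Rightarrow> nat" where
  "sent_code (Eq a b) = prod_encode (0, prod_encode (a, b))"
| "sent_code (Lt a b) = prod_encode (1, prod_encode (a, b))"

definition lit_code :: "lit \<Rightarrow> nat" where
  "lit_code l = prod_encode (if fst l then 1 else 0, sent_code (snd l))"

definition enum_op :: "(lit set \<times> lit) set \<Rightarrow> bool" where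
  "enum_op \<Gamma> \<longleftrightarrow> (\<forall>p\<in>\<Gamma>. finite (fst p)) \<and>
     ce {prod_encode (set_encode (lit_code ` \<alpha>), lit_code \<phi>) | \<alpha> \<phi>. (\<alpha>, \<phi>) \<in> \<Gamma>}"

definition enum_apply :: "(lit set \<times> lit) set \<Rightarrow> lit set \<Rightarrow> lit set" where
  "enum_apply \<Gamma> X = {\<phi>. \<exists>\<alpha>. (\<alpha>, \<phi>) \<in> \<Gamma> \<and> \<alpha> \<subseteq> X}"

type_synonym 'a lo = "'a set \<times> 'a rel"

definition is_lo :: "'a lo \<Rightarrow> bool" where
  "is_lo L \<longleftrightarrow> snd L \<subseteq> fst L \<times> fst L \<and> (\<forall>x\<in>fst L. (x, x) \<notin> snd L) \<and> trans (snd L)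
     \<and> (\<forall>x\<in>fst L. \<forall>y\<in>fst L. x \<noteq> y \<longrightarrow> (x, y) \<in> snd L \<or> (y, x) \<in> snd L)"

definition lo_iso :: "'a lo \<Rightarrow> 'b lo \<Rightarrow> bool" where
  "lo_iso L M \<longleftrightarrow> (\<exists>f. bij_betw f (fst L) (fst M) \<and>
     (\<forall>x\<in>fst L. \<forall>y\<in>fst L. (x, y) \<in> snd L \<longleftrightarrow> (f x, f y) \<in> snd M))"

definition diag :: "nat lo \<Rightarrow> lit set" where
  "diag L = {(True, Eq a a) | a. a \<in> fst L}
          \<union> {(False, Eq a b) | a b. a \<in> fst L \<and> b \<in> fst L \<and> a \<noteq> b}
          \<union> {(True, Lt a b) | a b. a \<in> fst L \<and> b \<in> fst L \<and> (a, b) \<in> snd L}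
          \<union> {(False, Lt a b) | a b. a \<in> fst L \<and> b \<in> fst L \<and> (a, b) \<notin> snd L}"

definition cls2 :: "'a lo \<Rightarrow> 'a lo \<Rightarrow> nat lo set" where
  "cls2 A B = {L. is_lo L \<and> (lo_iso L A \<or> lo_iso L B)}"

definition comp_emb :: "nat lo set \<Rightarrow> nat lo set \<Rightarrow> bool" (infix "\<le>\<^sub>c" 50) where
  "K0 \<le>\<^sub>c K1 \<longleftrightarrow> (\<exists>\<Gamma>. enum_op \<Gamma> \<and>
     (\<forall>A\<in>K0. \<exists>B\<in>K1. enum_apply \<Gamma> (diag A) = diag B) \<and>
     (\<forall>A\<in>K0. \<forall>A'\<in>K0. \<forall>B\<in>K1. \<forall>B'\<in>K1.
        enum_apply \<Gamma> (diag A) = diag B \<longrightarrow> enum_apply \<Gamma> (diag A') = diag B' \<longrightarrow>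
        (lo_iso A A' \<longleftrightarrow> lo_iso B B')))"

definition omega :: "nat lo" where
  "omega = (UNIV, {(a, b). a < b})"

definition fin_ord :: "nat \<Rightarrow> nat lo" where
  "fin_ord n = ({..<n}, {(a, b). a < b \<and> b < n})"

definition lo_rev :: "'a lo \<Rightarrow> 'a lo" where
  "lo_rev L = (fst L, (snd L)\<inverse>)"

text \<open>Ordinal-style product: L \<cdot> M is M copies of L (lexicographic, M-coordinate first).\<close>
definition lo_mult :: "'a lo \<Rightarrow> 'b lo \<Rightarrow> ('b \<times> 'a) lo" where
  "lo_mult L M = (fst M \<times> fst L,
     {((m, l), (m', l')). m \<in> fst M \<and> m' \<in> fst M \<and> l \<in> fst L \<and> l' \<in> fst L \<and>
        ((m, m') \<in> snd M \<or> (m = m' \<and> (l, l') \<in> snd L))})"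

end

theory Submission
  imports Defs "HOL-Library.Infinite_Set"
begin

(*
  Gamma n sends a linear order A on a subset of omega to the order on the triples (i, w, x)
  with i < n, w <=_A x and w <= v (as numbers) for some v >=_A x, ordered lexicographically:
  first by i, then by x in A, then by w in A. Each atomic or negated atomic fact about this
  order follows from finitely many facts about A, which makes Gamma n an enumeration operator.

  If A has type omega*2, the numeric bound is vacuous and each of the n copies is the sum over
  x in omega*2 of the segments [0, x], that is omega + omega^2 = omega^2. If A has type
  omega^star*2, the bound leaves only finitely many w for each x in the second copy, so each
  copy is (omega^2)^star followed by a descending sequence of finite blocks, again (omega^2)^star.
  In both cases the image is cut into blocks indexed by (i, k) of type omega, resp. omega^star,
  which gives the isomorphism. As omega*2 and omega^2*n have a least element while their
  reversed counterparts do not, Gamma n preserves and reflects isomorphism on these classes.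
*)

section \<open>Partial recursive functions\<close>

inductive_cases eval_ZeroE: "eval Zero xs y"
inductive_cases eval_SuccE: "eval Succ xs y"
inductive_cases eval_ProjE: "eval (Proj i) xs y"
inductive_cases eval_CompE: "eval (Comp f gs) xs y"
inductive_cases eval_Prim0E: "eval (Prim f g) (0 # xs) y"
inductive_cases eval_PrimSucE: "eval (Prim f g) (Suc n # xs) y"
inductive_cases eval_MnE: "eval (Mn f) xs y"

lemma eval_deterministic:
  assumes "eval c xs y" and "eval c xs y'"
  shows "y = y'"
  using assms
proof (induction arbitrary: y' rule: eval.induct)
  case zero
  from zero.prems show ?case by (rule eval_ZeroE) simp
next
  case succ
  from succ.prems show ?case by (rule eval_SuccE) simp
next
  case proj
  from proj.prems show ?case by (rule eval_ProjE) simp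
next
  case (comp ys gs xs f z)
  from comp.prems obtain ys' where len: "length ys' = length gs"
    and args: "\<forall>i<length gs. eval (gs ! i) xs (ys' ! i)" and "eval f ys' y'"
    by (rule eval_CompE) blast
  moreover have "ys = ys'"
  proof (rule nth_equalityI)
    show "length ys = length ys'" using comp.hyps(1) len by simp
    show "ys ! i = ys' ! i" if "i < length ys" for i
      using that comp.hyps(1) comp.IH(1) args by simp
  qed
  ultimately show ?case using comp.IH(2) by blast
next
  case prim0
  from prim0.prems show ?case by (rule eval_Prim0E) (rule prim0.IH)
next
  case primS
  from primS.prems show ?case by (rule eval_PrimSucE) (use primS.IH in blast)
next
  case (mn f n xs)
  from mn.prems have zero: "eval f (y' # xs) 0" and pos: "\<forall>m<y'. \<exists>y. eval f (m # xs) (Suc y)"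
    by (rule eval_MnE, simp)+
  show ?case
  proof (rule linorder_cases)
    assume "n < y'"
    then show ?thesis using pos mn.IH(1) by blast
  next
    assume "y' < n"
    then show ?thesis using zero mn.IH(2) by blast
  qed
qed

lemma eval_Zero_eq: "y = 0 \<Longrightarrow> eval Zero xs y"
  by (simp add: eval.zero)

lemma eval_Succ_eq: "y = Suc x \<Longrightarrow> eval Succ (x # xs) y"
  by (simp add: eval.succ)

lemma eval_Proj_nth: "i < length xs \<Longrightarrow> y = xs ! i \<Longrightarrow> eval (Proj i) xs y"
  by (simp add: eval.proj)

lemma eval_Comp1: "eval g xs a \<Longrightarrow> eval f [a] z \<Longrightarrow> eval (Comp f [g]) xs z"
  by (rule eval.comp[where ys="[a]"]) auto

lemma eval_Comp2:
  "eval g1 xs a \<Longrightarrow> eval g2 xs b \<Longrightarrow> eval f [a, b] z \<Longrightarrow> eval (Comp f [g1, g2]) xs z"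
  by (rule eval.comp[where ys="[a, b]"]) (auto simp: less_Suc_eq nth_Cons')

lemma eval_Comp3:
  "eval g1 xs a \<Longrightarrow> eval g2 xs b \<Longrightarrow> eval g3 xs c \<Longrightarrow> eval f [a, b, c] z
    \<Longrightarrow> eval (Comp f [g1, g2, g3]) xs z"
  by (rule eval.comp[where ys="[a, b, c]"]) (auto simp: less_Suc_eq nth_Cons')

lemma eval_output_eq: "eval c xs y \<Longrightarrow> y = z \<Longrightarrow> eval c xs z"
  by simp

lemmas eval_rules =
  eval_Zero_eq eval_Succ_eq eval_Proj_nth eval_Comp1 eval_Comp2 eval_Comp3 eval.prim0 eval.primS

definition rf_add :: recf where
  "rf_add = Prim (Proj 0) (Comp Succ [Proj 1])"

lemma eval_rf_add: "eval rf_add [a, b] (a + b)"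
  unfolding rf_add_def by (induction a) (fastforce intro: eval_rules)+

definition rf_pred :: recf where
  "rf_pred = Prim Zero (Proj 0)"

lemma eval_rf_pred: "eval rf_pred [a] (a - 1)"
  unfolding rf_pred_def by (induction a) (fastforce intro: eval_rules)+

definition rf_monus :: recf where
  "rf_monus = Comp (Prim (Proj 0) (Comp rf_pred [Proj 1])) [Proj 1, Proj 0]"

lemma eval_rf_monus: "eval rf_monus [a, b] (a - b)"
proof -
  have "eval (Prim (Proj 0) (Comp rf_pred [Proj 1])) [b, a] (a - b)"
    by (induction b) (fastforce intro: eval_rules eval_rf_pred[THEN eval_output_eq])+
  then show ?thesis
    unfolding rf_monus_def by (fastforce intro: eval_rules)
qed

definition rf_triangle :: recf where
  "rf_triangle = Prim Zero (Comp rf_add [Proj 1, Comp Succ [Proj 0]])"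

lemma eval_rf_triangle: "eval rf_triangle [k] (triangle k)"
  unfolding rf_triangle_def by (induction k) (fastforce intro: eval_rules eval_rf_add[THEN eval_output_eq])+

definition rf_pow2 :: recf where
  "rf_pow2 = Prim (Comp Succ [Zero]) (Comp rf_add [Proj 1, Proj 1])"

lemma eval_rf_pow2: "eval rf_pow2 [k] (2 ^ k)"
  unfolding rf_pow2_def by (induction k) (fastforce intro: eval_rules eval_rf_add[THEN eval_output_eq])+

definition rf_parity :: recf where
  "rf_parity = Prim Zero (Comp rf_monus [Comp Succ [Zero], Proj 1])"

lemma eval_rf_parity: "eval rf_parity [s] (s mod 2)"
proof (induction s)
  case 0
  then show ?case unfolding rf_parity_def by (fastforce intro: eval_rules)
next
  case (Suc s)
  have "Suc 0 - s mod 2 = Suc s mod 2" by presburger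
  with Suc show ?case unfolding rf_parity_def by (fastforce intro: eval_rules eval_rf_monus[THEN eval_output_eq])
qed

definition rf_half :: recf where
  "rf_half = Prim Zero (Comp rf_add [Proj 1, Comp rf_parity [Proj 0]])"

lemma eval_rf_half: "eval rf_half [s] (s div 2)"
proof (induction s)
  case 0
  then show ?case unfolding rf_half_def by (fastforce intro: eval_rules)
next
  case (Suc s)
  have "s div 2 + s mod 2 = Suc s div 2" by presburger
  with Suc show ?case
    unfolding rf_half_def by (fastforce intro: eval_rules eval_rf_parity eval_rf_add[THEN eval_output_eq])
qed

definition rf_shiftr :: recf where
  "rf_shiftr = Prim (Proj 0) (Comp rf_half [Proj 1])"

lemma eval_rf_shiftr: "eval rf_shiftr [a, s] (s div 2 ^ a)"
proof (induction a)
  case 0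
  then show ?case unfolding rf_shiftr_def by (fastforce intro: eval_rules)
next
  case (Suc a)
  have "s div 2 ^ a div 2 = s div 2 ^ Suc a" by (metis div_mult2_eq power_Suc2)
  with Suc show ?case
    unfolding rf_shiftr_def by (fastforce intro: eval_rules eval_rf_half[THEN eval_output_eq])
qed

definition rf_ifz :: recf where
  "rf_ifz = Prim (Proj 0) (Proj 3)"

lemma eval_rf_ifz: "eval rf_ifz [c, x, y] (if c = 0 then x else y)"
  unfolding rf_ifz_def by (induction c) (fastforce intro: eval_rules simp: numeral_eq_Suc)+

definition tri_root :: "nat \<Rightarrow> nat" where
  "tri_root t = (LEAST k. t < triangle (Suc k))"

lemma less_triangle_Suc_tri_root: "t < triangle (Suc (tri_root t))"
proof -
  have "t < triangle (Suc t)" by (induction t) auto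
  then show ?thesis unfolding tri_root_def by (rule LeastI)
qed

lemma triangle_Suc_le_of_less_tri_root: "m < tri_root t \<Longrightarrow> triangle (Suc m) \<le> t"
  unfolding tri_root_def using not_less_Least by (metis not_less)

definition rf_root :: recf where
  "rf_root = Mn (Comp rf_monus [Comp Succ [Proj 1], Comp rf_triangle [Comp Succ [Proj 0]]])"

lemma eval_rf_root: "eval rf_root [t] (tri_root t)"
proof -
  have step: "eval (Comp rf_monus [Comp Succ [Proj 1], Comp rf_triangle [Comp Succ [Proj 0]]]) [k, t]
      (Suc t - triangle (Suc k))" for k
    by (fastforce intro: eval_rules eval_rf_monus eval_rf_triangle)
  show ?thesis
    unfolding rf_root_def
  proof (rule eval.mn)
    show "eval (Comp rf_monus [Comp Succ [Proj 1], Comp rf_triangle [Comp Succ [Proj 0]]])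
        [tri_root t, t] 0"
      using step[of "tri_root t"] less_triangle_Suc_tri_root[of t] by simp
    show "\<forall>m<tri_root t. \<exists>y. eval (Comp rf_monus [Comp Succ [Proj 1], Comp rf_triangle [Comp Succ [Proj 0]]])
        [m, t] (Suc y)"
      using step triangle_Suc_le_of_less_tri_root Suc_diff_le by metis
  qed
qed

fun rf_const :: "nat \<Rightarrow> recf" where
  "rf_const 0 = Zero"
| "rf_const (Suc n) = Comp Succ [rf_const n]"

lemma eval_rf_const: "eval (rf_const n) xs n"
  by (induction n) (fastforce intro: eval_rules)+

datatype aexp = Var nat | Num nat | Add aexp aexp | Sub aexp aexp | Tri aexp | Pow2 aexp
  | Par aexp | Shr aexp aexp | Ifz aexp aexp aexp | Root aexp

fun aval :: "aexp \<Rightarrow> nat list \<Rightarrow> nat" where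
  "aval (Var i) xs = xs ! i"
| "aval (Num n) xs = n"
| "aval (Add a b) xs = aval a xs + aval b xs"
| "aval (Sub a b) xs = aval a xs - aval b xs"
| "aval (Tri a) xs = triangle (aval a xs)"
| "aval (Pow2 a) xs = 2 ^ aval a xs"
| "aval (Par a) xs = aval a xs mod 2"
| "aval (Shr a b) xs = aval b xs div 2 ^ aval a xs"
| "aval (Ifz a b c) xs = (if aval a xs = 0 then aval b xs else aval c xs)"
| "aval (Root a) xs = tri_root (aval a xs)"

fun vars_below :: "nat \<Rightarrow> aexp \<Rightarrow> bool" where
  "vars_below k (Var i) = (i < k)"
| "vars_below k (Num n) = True"
| "vars_below k (Add a b) = (vars_below k a \<and> vars_below k b)"
| "vars_below k (Sub a b) = (vars_below k a \<and> vars_below k b)"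
| "vars_below k (Tri a) = vars_below k a"
| "vars_below k (Pow2 a) = vars_below k a"
| "vars_below k (Par a) = vars_below k a"
| "vars_below k (Shr a b) = (vars_below k a \<and> vars_below k b)"
| "vars_below k (Ifz a b c) = (vars_below k a \<and> vars_below k b \<and> vars_below k c)"
| "vars_below k (Root a) = vars_below k a"

fun rf_of_aexp :: "aexp \<Rightarrow> recf" where
  "rf_of_aexp (Var i) = Proj i"
| "rf_of_aexp (Num n) = rf_const n"
| "rf_of_aexp (Add a b) = Comp rf_add [rf_of_aexp a, rf_of_aexp b]"
| "rf_of_aexp (Sub a b) = Comp rf_monus [rf_of_aexp a, rf_of_aexp b]"
| "rf_of_aexp (Tri a) = Comp rf_triangle [rf_of_aexp a]"
| "rf_of_aexp (Pow2 a) = Comp rf_pow2 [rf_of_aexp a]"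
| "rf_of_aexp (Par a) = Comp rf_parity [rf_of_aexp a]"
| "rf_of_aexp (Shr a b) = Comp rf_shiftr [rf_of_aexp a, rf_of_aexp b]"
| "rf_of_aexp (Ifz a b c) = Comp rf_ifz [rf_of_aexp a, rf_of_aexp b, rf_of_aexp c]"
| "rf_of_aexp (Root a) = Comp rf_root [rf_of_aexp a]"

lemma eval_rf_of_aexp: "vars_below (length xs) e \<Longrightarrow> eval (rf_of_aexp e) xs (aval e xs)"
proof (induction e)
  case (Ifz a b c)
  then show ?case
    unfolding rf_of_aexp.simps aval.simps vars_below.simps
    by (intro eval_Comp3[OF _ _ _ eval_rf_ifz]) auto
qed (auto intro: eval_rules eval_rf_const eval_rf_add eval_rf_monus eval_rf_triangle eval_rf_pow2
      eval_rf_parity eval_rf_shiftr eval_rf_root)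

lemma aval_append: "vars_below (length xs) e \<Longrightarrow> aval e (xs @ ys) = aval e xs"
  by (induction e) (auto simp: nth_append)

lemma vars_below_mono: "vars_below k e \<Longrightarrow> k \<le> k' \<Longrightarrow> vars_below k' e"
  by (induction e) auto

(* Tests encode truth by the value 0. *)
definition eq_test :: "aexp \<Rightarrow> aexp \<Rightarrow> aexp" where
  "eq_test a b = Add (Sub a b) (Sub b a)"

lemma aval_eq_test_eq_0 [simp]: "aval (eq_test a b) xs = 0 \<longleftrightarrow> aval a xs = aval b xs"
  unfolding eq_test_def by auto

definition le_test :: "aexp \<Rightarrow> aexp \<Rightarrow> aexp" where
  "le_test a b = Sub a b"

definition lt_test :: "aexp \<Rightarrow> aexp \<Rightarrow> aexp" where
  "lt_test a b = Sub (Add a (Num 1)) b"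

definition or_test :: "aexp \<Rightarrow> aexp \<Rightarrow> aexp" where
  "or_test a b = Ifz a (Num 0) b"

definition not_test :: "aexp \<Rightarrow> aexp" where
  "not_test a = Ifz a (Num 1) (Num 0)"

lemma aval_le_test_eq_0 [simp]: "aval (le_test a b) xs = 0 \<longleftrightarrow> aval a xs \<le> aval b xs"
  and aval_lt_test_eq_0 [simp]: "aval (lt_test a b) xs = 0 \<longleftrightarrow> aval a xs < aval b xs"
  and aval_or_test_eq_0 [simp]: "aval (or_test a b) xs = 0 \<longleftrightarrow> aval a xs = 0 \<or> aval b xs = 0"
  and aval_not_test_eq_0 [simp]: "aval (not_test a) xs = 0 \<longleftrightarrow> aval a xs \<noteq> 0"
  unfolding le_test_def lt_test_def or_test_def not_test_def by auto

lemma aval_Add_eq_0: "aval (Add a b) xs = 0 \<longleftrightarrow> aval a xs = 0 \<and> aval b xs = 0"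
  by simp

lemma eval_Mn_Least:
  assumes total: "\<And>m. eval f (m # xs) (g m)" and "\<exists>m. g m = 0"
  shows "eval (Mn f) xs (LEAST m. g m = 0)"
proof (rule eval.mn)
  show "eval f ((LEAST m. g m = 0) # xs) 0"
    using total LeastI_ex[OF assms(2)] by metis
  show "\<forall>m<(LEAST m. g m = 0). \<exists>y. eval f (m # xs) (Suc y)"
    using total not_less_Least not0_implies_Suc by metis
qed

lemma ce_range_aval:
  assumes "vars_below 1 e"
  shows "ce (range (\<lambda>t. aval e [t]))"
proof -
  define test where "test = rf_of_aexp (eq_test e (Var 1))"
  have eval_test: "eval test [m, z] (aval (eq_test e (Var 1)) [m, z])" for m z
    unfolding test_def using assms
    by (intro eval_rf_of_aexp) (auto simp: eq_test_def numeral_2_eq_2 elim: vars_below_mono)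
  have test_eq_0: "aval (eq_test e (Var 1)) [m, z] = 0 \<longleftrightarrow> aval e [m] = z" for m z
    using aval_append[of "[m]" e "[z]"] assms by simp
  have "z \<in> range (\<lambda>t. aval e [t]) \<longleftrightarrow> (\<exists>t. eval (Mn test) [z] t)" for z
  proof
    assume "z \<in> range (\<lambda>t. aval e [t])"
    then have "\<exists>m. aval (eq_test e (Var 1)) [m, z] = 0"
      using test_eq_0 by auto
    then show "\<exists>t. eval (Mn test) [z] t"
      using eval_Mn_Least[OF eval_test] by blast
  next
    assume "\<exists>t. eval (Mn test) [z] t"
    then obtain t where "eval test [t, z] 0"
      by (auto elim: eval_MnE)
    then have "aval (eq_test e (Var 1)) [t, z] = 0"
      using eval_deterministic[OF eval_test] by blast
    then show "z \<in> range (\<lambda>t. aval e [t])"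
      using test_eq_0 by (metis rangeI)
  qed
  then show ?thesis unfolding ce_def by blast
qed

section \<open>The enumeration operator\<close>

definition triple_code :: "nat \<times> nat \<times> nat \<Rightarrow> nat" where
  "triple_code = (\<lambda>(i, w, x). prod_encode (i, prod_encode (w, x)))"

lemma triple_code_eq_iff [simp]: "triple_code p = triple_code q \<longleftrightarrow> p = q"
  unfolding triple_code_def by (auto split: prod.splits dest: inj_onD[OF inj_prod_encode])

(* k = 0 serves rules with i < i', which need no order premise: it repeats the premise
   (False, Lt x w), so that every premise set has the same shape. *)
definition order_lit :: "nat \<Rightarrow> nat \<Rightarrow> nat \<Rightarrow> nat \<Rightarrow> nat \<Rightarrow> lit" where
  "order_lit k x x' w w' =
     (if k = 1 then (True, Lt x x') else if k = 2 then (True, Lt w w') else (False, Lt x w))"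

definition out_lit :: "nat \<Rightarrow> nat \<Rightarrow> nat \<Rightarrow> lit" where
  "out_lit tag e e' =
     (if tag = 0 then (True, Eq e e) else if tag = 1 then (False, Lt e e)
      else if tag = 2 then (False, Eq e e') else if tag = 3 then (True, Lt e e') else (False, Lt e' e))"

definition rule_premises :: "nat \<Rightarrow> nat \<Rightarrow> nat \<Rightarrow> nat \<Rightarrow> nat \<Rightarrow> nat \<Rightarrow> nat \<Rightarrow> lit set" where
  "rule_premises w x v w' x' v' k =
     {(False, Lt x w), (False, Lt v x), (False, Lt x' w'), (False, Lt v' x'), order_lit k x x' w w'}"

definition rule_ok ::
  "nat \<Rightarrow> nat \<Rightarrow> nat \<Rightarrow> nat \<Rightarrow> nat \<Rightarrow> nat \<Rightarrow> nat \<Rightarrow> nat \<Rightarrow> nat \<Rightarrow> nat \<Rightarrow> nat \<Rightarrow> bool" where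
  "rule_ok n tag i w x v i' w' x' v' k \<longleftrightarrow> tag \<le> 4 \<and> i < n \<and> i' < n \<and> w \<le> v \<and> w' \<le> v' \<and>
     (tag = 2 \<longrightarrow> (i, w, x) \<noteq> (i', w', x')) \<and>
     (3 \<le> tag \<longrightarrow> (k = 0 \<and> i < i') \<or> (k = 1 \<and> i = i') \<or> (k = 2 \<and> i = i' \<and> x = x'))"

definition Gamma :: "nat \<Rightarrow> (lit set \<times> lit) set" where
  "Gamma n = {(rule_premises w x v w' x' v' k, out_lit tag (triple_code (i, w, x)) (triple_code (i', w', x')))
     | tag i w x v i' w' x' v' k. rule_ok n tag i w x v i' w' x' v' k}"

definition rule_code ::
  "nat \<Rightarrow> nat \<Rightarrow> nat \<Rightarrow> nat \<Rightarrow> nat \<Rightarrow> nat \<Rightarrow> nat \<Rightarrow> nat \<Rightarrow> nat \<Rightarrow> nat \<Rightarrow> nat" where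
  "rule_code tag i w x v i' w' x' v' k =
     prod_encode (set_encode (lit_code ` rule_premises w x v w' x' v' k),
       lit_code (out_lit tag (triple_code (i, w, x)) (triple_code (i', w', x'))))"

section \<open>Enumerability of the operator\<close>

lemma triangle_mono: "m \<le> n \<Longrightarrow> triangle m \<le> triangle n"
  by (induction n) (auto simp: le_Suc_eq)

lemma tri_root_prod_encode: "tri_root (prod_encode (a, b)) = a + b"
  unfolding tri_root_def
proof (rule Least_equality)
  show "prod_encode (a, b) < triangle (Suc (a + b))"
    by (simp add: prod_encode_def)
  show "a + b \<le> k" if "prod_encode (a, b) < triangle (Suc k)" for k
  proof (rule ccontr)
    assume "\<not> a + b \<le> k"
    then have "triangle (Suc k) \<le> triangle (a + b)" by (intro triangle_mono) simp
    then show False using that by (simp add: prod_encode_def)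
  qed
qed

definition pair_exp :: "aexp \<Rightarrow> aexp \<Rightarrow> aexp" where
  "pair_exp a b = Add (Tri (Add a b)) a"

definition fst_exp :: "aexp \<Rightarrow> aexp" where
  "fst_exp e = Sub e (Tri (Root e))"

definition snd_exp :: "aexp \<Rightarrow> aexp" where
  "snd_exp e = Sub (Root e) (fst_exp e)"

lemma aval_pair_exp [simp]: "aval (pair_exp a b) xs = prod_encode (aval a xs, aval b xs)"
  unfolding pair_exp_def by (simp add: prod_encode_def)

lemma aval_fst_exp [simp]: "aval (fst_exp e) xs = fst (prod_decode (aval e xs))"
  and aval_snd_exp [simp]: "aval (snd_exp e) xs = snd (prod_decode (aval e xs))"
proof -
  obtain a b where ab: "aval e xs = prod_encode (a, b)"
    by (metis prod_decode_inverse surj_pair)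
  show "aval (fst_exp e) xs = fst (prod_decode (aval e xs))"
    unfolding fst_exp_def by (simp add: ab tri_root_prod_encode) (simp add: prod_encode_def)
  show "aval (snd_exp e) xs = snd (prod_decode (aval e xs))"
    unfolding snd_exp_def fst_exp_def by (simp add: ab tri_root_prod_encode) (simp add: prod_encode_def)
qed

definition insert_exp :: "aexp \<Rightarrow> aexp \<Rightarrow> aexp" where
  "insert_exp a s = Ifz (Par (Shr a s)) (Add (Pow2 a) s) s"

lemma aval_insert_exp [simp]:
  "aval (insert_exp a s) xs = set_encode (insert (aval a xs) (set_decode (aval s xs)))"
proof -
  have "aval a xs \<in> set_decode (aval s xs) \<longleftrightarrow> odd (aval s xs div 2 ^ aval a xs)"
    unfolding set_decode_def by blast
  then show ?thesis
    unfolding insert_exp_def by (auto simp: insert_absorb finite_set_decode)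
qed

definition eq_lit_exp :: "bool \<Rightarrow> aexp \<Rightarrow> aexp \<Rightarrow> aexp" where
  "eq_lit_exp b a c = pair_exp (Num (of_bool b)) (pair_exp (Num 0) (pair_exp a c))"

definition lt_lit_exp :: "bool \<Rightarrow> aexp \<Rightarrow> aexp \<Rightarrow> aexp" where
  "lt_lit_exp b a c = pair_exp (Num (of_bool b)) (pair_exp (Num 1) (pair_exp a c))"

lemma aval_eq_lit_exp [simp]: "aval (eq_lit_exp b a c) xs = lit_code (b, Eq (aval a xs) (aval c xs))"
  unfolding eq_lit_exp_def lit_code_def by simp

lemma aval_lt_lit_exp [simp]: "aval (lt_lit_exp b a c) xs = lit_code (b, Lt (aval a xs) (aval c xs))"
  unfolding lt_lit_exp_def lit_code_def by simp

definition triple_exp :: "aexp \<Rightarrow> aexp \<Rightarrow> aexp \<Rightarrow> aexp" where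
  "triple_exp i w x = pair_exp i (pair_exp w x)"

definition order_lit_exp :: "aexp \<Rightarrow> aexp \<Rightarrow> aexp \<Rightarrow> aexp \<Rightarrow> aexp \<Rightarrow> aexp" where
  "order_lit_exp k x x' w w' = Ifz (eq_test k (Num 1)) (lt_lit_exp True x x')
     (Ifz (eq_test k (Num 2)) (lt_lit_exp True w w') (lt_lit_exp False x w))"

definition out_lit_exp :: "aexp \<Rightarrow> aexp \<Rightarrow> aexp \<Rightarrow> aexp" where
  "out_lit_exp tag e e' = Ifz (eq_test tag (Num 0)) (eq_lit_exp True e e)
     (Ifz (eq_test tag (Num 1)) (lt_lit_exp False e e)
     (Ifz (eq_test tag (Num 2)) (eq_lit_exp False e e')
     (Ifz (eq_test tag (Num 3)) (lt_lit_exp True e e') (lt_lit_exp False e' e))))"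

definition rule_code_exp ::
  "aexp \<Rightarrow> aexp \<Rightarrow> aexp \<Rightarrow> aexp \<Rightarrow> aexp \<Rightarrow> aexp \<Rightarrow> aexp \<Rightarrow> aexp \<Rightarrow> aexp \<Rightarrow> aexp \<Rightarrow> aexp" where
  "rule_code_exp tag i w x v i' w' x' v' k = pair_exp
     (insert_exp (lt_lit_exp False x w) (insert_exp (lt_lit_exp False v x)
       (insert_exp (lt_lit_exp False x' w') (insert_exp (lt_lit_exp False v' x')
         (insert_exp (order_lit_exp k x x' w w') (Num 0))))))
     (out_lit_exp tag (triple_exp i w x) (triple_exp i' w' x'))"

lemma aval_rule_code_exp:
  "aval (rule_code_exp tag i w x v i' w' x' v' k) xs =
    rule_code (aval tag xs) (aval i xs) (aval w xs) (aval x xs) (aval v xs)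
      (aval i' xs) (aval w' xs) (aval x' xs) (aval v' xs) (aval k xs)"
proof -
  have [simp]: "aval (triple_exp i w x) xs = triple_code (aval i xs, aval w xs, aval x xs)" for i w x
    unfolding triple_exp_def triple_code_def by simp
  have [simp]: "aval (order_lit_exp k x x' w w') xs =
      lit_code (order_lit (aval k xs) (aval x xs) (aval x' xs) (aval w xs) (aval w' xs))"
    unfolding order_lit_exp_def order_lit_def by simp
  have [simp]: "aval (out_lit_exp tag e e') xs = lit_code (out_lit (aval tag xs) (aval e xs) (aval e' xs))"
    for e e' unfolding out_lit_exp_def out_lit_def by simp
  show ?thesis
    unfolding rule_code_exp_def rule_code_def rule_premises_def
    by (simp add: finite_set_decode del: set_encode_insert)
qed

definition rule_ok_exp ::
  "nat \<Rightarrow> aexp \<Rightarrow> aexp \<Rightarrow> aexp \<Rightarrow> aexp \<Rightarrow> aexp \<Rightarrow> aexp \<Rightarrow> aexp \<Rightarrow> aexp \<Rightarrow> aexp \<Rightarrow> aexp \<Rightarrow> aexp" where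
  "rule_ok_exp n tag i w x v i' w' x' v' k =
     Add (le_test tag (Num 4)) (Add (lt_test i (Num n)) (Add (lt_test i' (Num n))
     (Add (le_test w v) (Add (le_test w' v')
     (Add (or_test (not_test (eq_test tag (Num 2)))
                   (not_test (Add (eq_test i i') (Add (eq_test w w') (eq_test x x')))))
          (or_test (lt_test tag (Num 3))
            (or_test (Add (eq_test k (Num 0)) (lt_test i i'))
            (or_test (Add (eq_test k (Num 1)) (eq_test i i'))
                     (Add (eq_test k (Num 2)) (Add (eq_test i i') (eq_test x x')))))))))))"

lemma aval_rule_ok_exp_eq_0:
  "aval (rule_ok_exp n tag i w x v i' w' x' v' k) xs = 0 \<longleftrightarrow>
    rule_ok n (aval tag xs) (aval i xs) (aval w xs) (aval x xs) (aval v xs)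
      (aval i' xs) (aval w' xs) (aval x' xs) (aval v' xs) (aval k xs)"
  unfolding rule_ok_exp_def rule_ok_def by (simp del: aval.simps(3) add: aval_Add_eq_0) linarith

fun tail_exp :: "nat \<Rightarrow> aexp" where
  "tail_exp 0 = Var 0"
| "tail_exp (Suc j) = snd_exp (tail_exp j)"

definition param_exp :: "nat \<Rightarrow> aexp" where
  "param_exp j = fst_exp (tail_exp j)"

lemma vars_below_tail_exp: "0 < k \<Longrightarrow> vars_below k (tail_exp j)"
  by (induction j) (auto simp: snd_exp_def fst_exp_def)

lemma vars_below_param_exp: "0 < k \<Longrightarrow> vars_below k (param_exp j)"
  using vars_below_tail_exp by (simp add: param_exp_def fst_exp_def)

(* The argument encodes the ten parameters of a rule. Tuples violating rule_ok are sent to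
   the all-zero rule, which is valid since n >= 1. *)
definition Gamma_enum_exp :: "nat \<Rightarrow> aexp" where
  "Gamma_enum_exp n =
     (let P = param_exp
      in Ifz (rule_ok_exp n (P 0) (P 1) (P 2) (P 3) (P 4) (P 5) (P 6) (P 7) (P 8) (tail_exp 9))
           (rule_code_exp (P 0) (P 1) (P 2) (P 3) (P 4) (P 5) (P 6) (P 7) (P 8) (tail_exp 9))
           (rule_code_exp (Num 0) (Num 0) (Num 0) (Num 0) (Num 0) (Num 0) (Num 0) (Num 0) (Num 0) (Num 0)))"

lemma range_Gamma_enum_exp:
  assumes "1 \<le> n"
  shows "range (\<lambda>t. aval (Gamma_enum_exp n) [t]) =
    {rule_code tag i w x v i' w' x' v' k | tag i w x v i' w' x' v' k. rule_ok n tag i w x v i' w' x' v' k}"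
proof (intro set_eqI iffI)
  fix z assume "z \<in> range (\<lambda>t. aval (Gamma_enum_exp n) [t])"
  moreover have "rule_ok n 0 0 0 0 0 0 0 0 0 0"
    using assms unfolding rule_ok_def by simp
  ultimately show "z \<in> {rule_code tag i w x v i' w' x' v' k | tag i w x v i' w' x' v' k.
      rule_ok n tag i w x v i' w' x' v' k}"
    unfolding Gamma_enum_exp_def Let_def
    by (auto simp only: aval.simps(9) aval_rule_ok_exp_eq_0 aval_rule_code_exp aval.simps(2)
        split: if_splits) blast+
next
  fix z assume "z \<in> {rule_code tag i w x v i' w' x' v' k | tag i w x v i' w' x' v' k.
      rule_ok n tag i w x v i' w' x' v' k}"
  then obtain tag i w x v i' w' x' v' k where z: "z = rule_code tag i w x v i' w' x' v' k"
    and ok: "rule_ok n tag i w x v i' w' x' v' k" by blast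
  define t where "t = prod_encode (tag, prod_encode (i, prod_encode (w, prod_encode (x, prod_encode (v,
     prod_encode (i', prod_encode (w', prod_encode (x', prod_encode (v', k)))))))))"
  have "aval (Gamma_enum_exp n) [t] = z"
    unfolding Gamma_enum_exp_def Let_def aval.simps(9) aval_rule_ok_exp_eq_0 aval_rule_code_exp
    by (simp add: t_def param_exp_def numeral_eq_Suc ok z)
  then show "z \<in> range (\<lambda>t. aval (Gamma_enum_exp n) [t])" by (metis rangeI)
qed

lemma enum_op_Gamma:
  assumes "1 \<le> n"
  shows "enum_op (Gamma n)"
  unfolding enum_op_def
proof
  show "\<forall>p\<in>Gamma n. finite (fst p)"
    unfolding Gamma_def rule_premises_def by auto
  have "{prod_encode (set_encode (lit_code ` \<alpha>), lit_code \<phi>) | \<alpha> \<phi>. (\<alpha>, \<phi>) \<in> Gamma n} =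
      range (\<lambda>t. aval (Gamma_enum_exp n) [t])"
    unfolding range_Gamma_enum_exp[OF assms] Gamma_def rule_code_def by blast
  moreover have "vars_below 1 (Gamma_enum_exp n)"
    by (simp add: Gamma_enum_exp_def rule_ok_exp_def rule_code_exp_def insert_exp_def
        lt_lit_exp_def eq_lit_exp_def pair_exp_def order_lit_exp_def out_lit_exp_def triple_exp_def
        eq_test_def le_test_def lt_test_def or_test_def not_test_def
        vars_below_param_exp vars_below_tail_exp)
  ultimately show "ce {prod_encode (set_encode (lit_code ` \<alpha>), lit_code \<phi>) | \<alpha> \<phi>. (\<alpha>, \<phi>) \<in> Gamma n}"
    using ce_range_aval by simp
qed

section \<open>Linear orders\<close>

lemma diag_iff [simp]:
  "(True, Eq a b) \<in> diag L \<longleftrightarrow> a = b \<and> a \<in> fst L"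
  "(False, Eq a b) \<in> diag L \<longleftrightarrow> a \<in> fst L \<and> b \<in> fst L \<and> a \<noteq> b"
  "(True, Lt a b) \<in> diag L \<longleftrightarrow> a \<in> fst L \<and> b \<in> fst L \<and> (a, b) \<in> snd L"
  "(False, Lt a b) \<in> diag L \<longleftrightarrow> a \<in> fst L \<and> b \<in> fst L \<and> (a, b) \<notin> snd L"
  unfolding diag_def by auto

lemma diag_inj:
  assumes "is_lo B" and "is_lo B'" and "diag B = diag B'"
  shows "B = B'"
proof -
  have "a \<in> fst B \<longleftrightarrow> a \<in> fst B'" for a
    using diag_iff(1)[of a a] assms(3) by blast
  moreover have "(a, b) \<in> snd L \<longleftrightarrow> (True, Lt a b) \<in> diag L" if "is_lo L" for a b L
    using that unfolding is_lo_def by auto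
  then have "(a, b) \<in> snd B \<longleftrightarrow> (a, b) \<in> snd B'" for a b
    using assms by blast
  ultimately show ?thesis by (simp add: prod_eq_iff set_eq_iff split_paired_all)
qed

definition lo_image :: "('a \<Rightarrow> 'b) \<Rightarrow> 'a lo \<Rightarrow> 'b lo" where
  "lo_image f L = (f ` fst L, map_prod f f ` snd L)"

lemma lo_image_rel_iff:
  assumes "inj f"
  shows "(f a, f b) \<in> snd (lo_image f L) \<longleftrightarrow> (a, b) \<in> snd L"
proof -
  have "inj (map_prod f f)" using assms by (simp add: prod.inj_map)
  then show ?thesis
    unfolding lo_image_def using inj_image_mem_iff[of "map_prod f f" "(a, b)" "snd L"] by simp
qed

lemma lo_iso_lo_image:
  assumes "inj f"
  shows "lo_iso L (lo_image f L)"
  unfolding lo_iso_def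
proof (intro exI conjI)
  show "bij_betw f (fst L) (fst (lo_image f L))"
    using assms unfolding lo_image_def by (simp add: bij_betw_def inj_on_subset[OF _ subset_UNIV])
  show "\<forall>x\<in>fst L. \<forall>y\<in>fst L. (x, y) \<in> snd L \<longleftrightarrow> (f x, f y) \<in> snd (lo_image f L)"
    using lo_image_rel_iff[OF assms] by blast
qed

lemma is_lo_lo_image:
  assumes "inj f" and "is_lo L"
  shows "is_lo (lo_image f L)"
proof -
  note rel = lo_image_rel_iff[OF assms(1)]
  show ?thesis
    using assms(2) unfolding is_lo_def
  proof (elim conjE, intro conjI ballI impI)
    assume "snd L \<subseteq> fst L \<times> fst L"
    then show "snd (lo_image f L) \<subseteq> fst (lo_image f L) \<times> fst (lo_image f L)"
      unfolding lo_image_def by auto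
  next
    fix a assume "a \<in> fst (lo_image f L)" and "\<forall>x\<in>fst L. (x, x) \<notin> snd L"
    moreover obtain a' where "a = f a'" "a' \<in> fst L"
      using \<open>a \<in> fst (lo_image f L)\<close> unfolding lo_image_def by auto
    ultimately show "(a, a) \<notin> snd (lo_image f L)"
      by (simp add: rel)
  next
    assume tr: "trans (snd L)"
    show "trans (snd (lo_image f L))"
    proof (rule transI)
      fix a b c assume "(a, b) \<in> snd (lo_image f L)" "(b, c) \<in> snd (lo_image f L)"
      then obtain a' b' c' where "a = f a'" "b = f b'" "c = f c'" "(a', b') \<in> snd L" "(b', c') \<in> snd L"
        unfolding lo_image_def by (auto simp: inj_eq[OF assms(1)])
      then show "(a, c) \<in> snd (lo_image f L)" using tr by (simp add: rel) (metis transD)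
    qed
  next
    fix a b assume "a \<in> fst (lo_image f L)" "b \<in> fst (lo_image f L)" "a \<noteq> b"
      and "\<forall>x\<in>fst L. \<forall>y\<in>fst L. x \<noteq> y \<longrightarrow> (x, y) \<in> snd L \<or> (y, x) \<in> snd L"
    moreover obtain a' b' where "a = f a'" "b = f b'" "a' \<in> fst L" "b' \<in> fst L"
      using \<open>a \<in> fst (lo_image f L)\<close> \<open>b \<in> fst (lo_image f L)\<close> unfolding lo_image_def by auto
    ultimately show "(a, b) \<in> snd (lo_image f L) \<or> (b, a) \<in> snd (lo_image f L)"
      by (auto simp add: rel)
  qed
qed

lemma lo_iso_sym:
  assumes "lo_iso L M"
  shows "lo_iso M L"
proof -
  obtain f where f: "bij_betw f (fst L) (fst M)"
    and rel: "\<forall>x\<in>fst L. \<forall>y\<in>fst L. (x, y) \<in> snd L \<longleftrightarrow> (f x, f y) \<in> snd M"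
    using assms unfolding lo_iso_def by blast
  define g where "g = the_inv_into (fst L) f"
  have g: "bij_betw g (fst M) (fst L)"
    unfolding g_def by (rule bij_betw_the_inv_into[OF f])
  have "(x, y) \<in> snd M \<longleftrightarrow> (g x, g y) \<in> snd L" if "x \<in> fst M" "y \<in> fst M" for x y
    using rel bij_betwE[OF g] that f_the_inv_into_f_bij_betw[OF f] unfolding g_def by metis
  with g show ?thesis
    unfolding lo_iso_def by blast
qed

lemma lo_iso_trans:
  assumes "lo_iso L M" and "lo_iso M N"
  shows "lo_iso L N"
proof -
  obtain f where f: "bij_betw f (fst L) (fst M)"
    and rel_f: "\<forall>x\<in>fst L. \<forall>y\<in>fst L. (x, y) \<in> snd L \<longleftrightarrow> (f x, f y) \<in> snd M"
    using assms(1) unfolding lo_iso_def by blast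
  obtain g where g: "bij_betw g (fst M) (fst N)"
    and rel_g: "\<forall>x\<in>fst M. \<forall>y\<in>fst M. (x, y) \<in> snd M \<longleftrightarrow> (g x, g y) \<in> snd N"
    using assms(2) unfolding lo_iso_def by blast
  have "(x, y) \<in> snd L \<longleftrightarrow> ((g \<circ> f) x, (g \<circ> f) y) \<in> snd N" if "x \<in> fst L" "y \<in> fst L" for x y
    using rel_f rel_g bij_betwE[OF f] that by simp
  with bij_betw_trans[OF f g] show ?thesis
    unfolding lo_iso_def by blast
qed

lemma lo_iso_of_mono_bij:
  assumes "is_lo L" and "bij_betw h (fst L) (fst M)"
    and asym: "\<And>a b. (a, b) \<in> snd M \<Longrightarrow> (b, a) \<notin> snd M"
    and mono: "\<And>x y. x \<in> fst L \<Longrightarrow> y \<in> fst L \<Longrightarrow> (x, y) \<in> snd L \<Longrightarrow> (h x, h y) \<in> snd M"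
  shows "lo_iso L M"
  unfolding lo_iso_def
proof (intro exI conjI ballI)
  show "bij_betw h (fst L) (fst M)" by fact
  fix x y assume xy: "x \<in> fst L" "y \<in> fst L"
  show "(x, y) \<in> snd L \<longleftrightarrow> (h x, h y) \<in> snd M"
  proof
    assume "(h x, h y) \<in> snd M"
    moreover have "x = y \<or> (y, x) \<in> snd L \<or> (x, y) \<in> snd L"
      using assms(1) xy unfolding is_lo_def by blast
    ultimately show "(x, y) \<in> snd L"
      using asym mono xy by blast
  qed (use mono xy in blast)
qed

definition has_least :: "'a lo \<Rightarrow> bool" where
  "has_least L \<longleftrightarrow> (\<exists>a\<in>fst L. \<forall>b\<in>fst L. b \<noteq> a \<longrightarrow> (a, b) \<in> snd L)"

lemma has_least_lo_iso:
  assumes "lo_iso L M" and "has_least L"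
  shows "has_least M"
proof -
  obtain f where f: "bij_betw f (fst L) (fst M)"
    and rel: "\<forall>x\<in>fst L. \<forall>y\<in>fst L. (x, y) \<in> snd L \<longleftrightarrow> (f x, f y) \<in> snd M"
    using assms(1) unfolding lo_iso_def by blast
  obtain a where a: "a \<in> fst L" "\<forall>b\<in>fst L. b \<noteq> a \<longrightarrow> (a, b) \<in> snd L"
    using assms(2) unfolding has_least_def by blast
  have "\<forall>b\<in>fst M. b \<noteq> f a \<longrightarrow> (f a, b) \<in> snd M"
    using a rel f unfolding bij_betw_def by auto
  then show ?thesis
    using a bij_betwE[OF f] unfolding has_least_def by blast
qed

lemma has_least_lo_mult:
  assumes "has_least L" and "has_least M"
  shows "has_least (lo_mult L M)"
proof -
  obtain l0 where l0: "l0 \<in> fst L" "\<forall>l\<in>fst L. l \<noteq> l0 \<longrightarrow> (l0, l) \<in> snd L"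
    using assms(1) unfolding has_least_def by blast
  obtain m0 where m0: "m0 \<in> fst M" "\<forall>m\<in>fst M. m \<noteq> m0 \<longrightarrow> (m0, m) \<in> snd M"
    using assms(2) unfolding has_least_def by blast
  have "\<forall>b\<in>fst (lo_mult L M). b \<noteq> (m0, l0) \<longrightarrow> ((m0, l0), b) \<in> snd (lo_mult L M)"
    using l0 m0 unfolding lo_mult_def by auto
  moreover have "(m0, l0) \<in> fst (lo_mult L M)"
    using l0 m0 unfolding lo_mult_def by simp
  ultimately show ?thesis
    unfolding has_least_def by blast
qed

lemma not_has_least_lo_mult:
  assumes irrefl: "\<forall>m\<in>fst M. (m, m) \<notin> snd M"
    and no_least: "\<forall>l\<in>fst L. \<exists>l'\<in>fst L. l' \<noteq> l \<and> (l, l') \<notin> snd L"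
  shows "\<not> has_least (lo_mult L M)"
proof
  assume "has_least (lo_mult L M)"
  then obtain m l where ml: "m \<in> fst M" "l \<in> fst L"
    and least: "\<forall>b\<in>fst (lo_mult L M). b \<noteq> (m, l) \<longrightarrow> ((m, l), b) \<in> snd (lo_mult L M)"
    unfolding has_least_def lo_mult_def by auto
  obtain l' where l': "l' \<in> fst L" "l' \<noteq> l" "(l, l') \<notin> snd L"
    using no_least ml(2) by blast
  have "(m, l') \<in> fst (lo_mult L M)" "(m, l') \<noteq> (m, l)"
    using ml l' unfolding lo_mult_def by auto
  then have "((m, l), (m, l')) \<in> snd (lo_mult L M)"
    using least by blast
  then show False
    using irrefl ml l' unfolding lo_mult_def by simp
qed

definition admissible :: "nat lo \<Rightarrow> nat \<Rightarrow> nat \<Rightarrow> bool" where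
  "admissible A w x \<longleftrightarrow> w \<in> fst A \<and> x \<in> fst A \<and> (x, w) \<notin> snd A \<and> (\<exists>v\<in>fst A. (v, x) \<notin> snd A \<and> w \<le> v)"

definition out_dom :: "nat \<Rightarrow> nat lo \<Rightarrow> (nat \<times> nat \<times> nat) set" where
  "out_dom n A = {(i, w, x). i < n \<and> admissible A w x}"

fun out_less :: "nat lo \<Rightarrow> nat \<times> nat \<times> nat \<Rightarrow> nat \<times> nat \<times> nat \<Rightarrow> bool" where
  "out_less A (i, w, x) (i', w', x') \<longleftrightarrow>
     i < i' \<or> (i = i' \<and> ((x, x') \<in> snd A \<or> (x = x' \<and> (w, w') \<in> snd A)))"

definition triple_order :: "nat \<Rightarrow> nat lo \<Rightarrow> (nat \<times> nat \<times> nat) lo" where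
  "triple_order n A = (out_dom n A, {(p, q). p \<in> out_dom n A \<and> q \<in> out_dom n A \<and> out_less A p q})"

definition out_order :: "nat \<Rightarrow> nat lo \<Rightarrow> nat lo" where
  "out_order n A = lo_image triple_code (triple_order n A)"

lemma triple_order_simps [simp]:
  "fst (triple_order n A) = out_dom n A"
  "(p, q) \<in> snd (triple_order n A) \<longleftrightarrow> p \<in> out_dom n A \<and> q \<in> out_dom n A \<and> out_less A p q"
  unfolding triple_order_def by simp_all

lemma out_dom_iff [simp]: "(i, w, x) \<in> out_dom n A \<longleftrightarrow> i < n \<and> admissible A w x"
  unfolding out_dom_def by simp

lemma admissible_self: "is_lo A \<Longrightarrow> x \<in> fst A \<Longrightarrow> admissible A x x"
  unfolding admissible_def is_lo_def by blast

lemma admissible_in_dom: "admissible A w x \<Longrightarrow> w \<in> fst A \<and> x \<in> fst A"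
  unfolding admissible_def by blast

lemma out_less_irrefl: "is_lo A \<Longrightarrow> p \<in> out_dom n A \<Longrightarrow> \<not> out_less A p p"
  unfolding is_lo_def by (cases p) (auto simp: admissible_def)

lemma out_less_trans:
  assumes "is_lo A" and "out_less A p q" and "out_less A q r"
  shows "out_less A p r"
proof -
  have tr: "(a, b) \<in> snd A \<Longrightarrow> (b, c) \<in> snd A \<Longrightarrow> (a, c) \<in> snd A" for a b c
    using assms(1) unfolding is_lo_def by (meson transD)
  obtain i w x j u y k t z where "p = (i, w, x)" "q = (j, u, y)" "r = (k, t, z)"
    by (cases p, cases q, cases r) auto
  then show ?thesis
    using assms(2,3) tr by auto
qed

lemma out_less_total:
  assumes "is_lo A" and "p \<in> out_dom n A" and "q \<in> out_dom n A" and "p \<noteq> q"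
  shows "out_less A p q \<or> out_less A q p"
proof -
  obtain i w x i' w' x' where pq: "p = (i, w, x)" "q = (i', w', x')"
    by (cases p, cases q) auto
  have "w \<in> fst A" "x \<in> fst A" "w' \<in> fst A" "x' \<in> fst A"
    using assms(2,3) admissible_in_dom[of A] unfolding pq by auto
  moreover have "\<forall>a\<in>fst A. \<forall>b\<in>fst A. a \<noteq> b \<longrightarrow> (a, b) \<in> snd A \<or> (b, a) \<in> snd A"
    using assms(1) unfolding is_lo_def by blast
  ultimately show ?thesis
    using assms(4) unfolding pq by auto
qed

lemma is_lo_triple_order:
  assumes "is_lo A"
  shows "is_lo (triple_order n A)"
  unfolding triple_order_def is_lo_def[where L="(_, _)"] fst_conv snd_conv
proof (intro conjI ballI impI)
  show "{(p, q). p \<in> out_dom n A \<and> q \<in> out_dom n A \<and> out_less A p q} \<subseteq> out_dom n A \<times> out_dom n A"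
    by blast
  show "(p, p) \<notin> {(p, q). p \<in> out_dom n A \<and> q \<in> out_dom n A \<and> out_less A p q}"
    if "p \<in> out_dom n A" for p
    using out_less_irrefl[OF assms that] by blast
  show "trans {(p, q). p \<in> out_dom n A \<and> q \<in> out_dom n A \<and> out_less A p q}"
    using out_less_trans[OF assms] by (auto intro: transI)
  show "(p, q) \<in> {(p, q). p \<in> out_dom n A \<and> q \<in> out_dom n A \<and> out_less A p q} \<or>
      (q, p) \<in> {(p, q). p \<in> out_dom n A \<and> q \<in> out_dom n A \<and> out_less A p q}"
    if "p \<in> out_dom n A" "q \<in> out_dom n A" "p \<noteq> q" for p q
    using out_less_total[OF assms that] that by blast
qed

lemma inj_triple_code: "inj triple_code"
  by (rule injI) simp

lemma is_lo_out_order: "is_lo A \<Longrightarrow> is_lo (out_order n A)"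
  unfolding out_order_def by (rule is_lo_lo_image[OF inj_triple_code is_lo_triple_order])

lemma lo_iso_out_order: "lo_iso (triple_order n A) (out_order n A)"
  unfolding out_order_def by (rule lo_iso_lo_image[OF inj_triple_code])

lemma fst_out_order: "fst (out_order n A) = triple_code ` out_dom n A"
  unfolding out_order_def lo_image_def triple_order_def by simp

lemma out_order_rel_iff:
  "(triple_code p, triple_code q) \<in> snd (out_order n A) \<longleftrightarrow>
    p \<in> out_dom n A \<and> q \<in> out_dom n A \<and> out_less A p q"
  unfolding out_order_def lo_image_rel_iff[OF inj_triple_code] triple_order_def by simp

lemma out_less_asym: "is_lo A \<Longrightarrow> p \<in> out_dom n A \<Longrightarrow> out_less A p q \<Longrightarrow> \<not> out_less A q p"
  using out_less_irrefl out_less_trans by blast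

definition out_lit_valid :: "nat \<Rightarrow> nat lo \<Rightarrow> nat \<Rightarrow> nat \<times> nat \<times> nat \<Rightarrow> nat \<times> nat \<times> nat \<Rightarrow> bool" where
  "out_lit_valid n A tag p q \<longleftrightarrow> p \<in> out_dom n A \<and> q \<in> out_dom n A \<and> tag \<le> 4 \<and>
     (tag = 2 \<longrightarrow> p \<noteq> q) \<and> (3 \<le> tag \<longrightarrow> out_less A p q)"

lemma diagE:
  assumes "\<phi> \<in> diag L"
  obtains (eq) a where "\<phi> = (True, Eq a a)" "a \<in> fst L"
    | (neq) a b where "\<phi> = (False, Eq a b)" "a \<in> fst L" "b \<in> fst L" "a \<noteq> b"
    | (less) a b where "\<phi> = (True, Lt a b)" "a \<in> fst L" "b \<in> fst L" "(a, b) \<in> snd L"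
    | (not_less) a b where "\<phi> = (False, Lt a b)" "a \<in> fst L" "b \<in> fst L" "(a, b) \<notin> snd L"
  using assms unfolding diag_def by blast

lemma out_lit_of_diag_out_order:
  assumes "is_lo A" and "\<phi> \<in> diag (out_order n A)"
  shows "\<exists>tag p q. \<phi> = out_lit tag (triple_code p) (triple_code q) \<and> out_lit_valid n A tag p q"
  using assms(2)
proof (cases rule: diagE)
  case (eq a)
  then obtain p where "a = triple_code p" "p \<in> out_dom n A"
    unfolding fst_out_order by blast
  with eq show ?thesis
    by (intro exI[of _ 0] exI[of _ p]) (simp add: out_lit_def out_lit_valid_def)
next
  case (neq a b)
  then obtain p q where "a = triple_code p" "b = triple_code q" "p \<in> out_dom n A" "q \<in> out_dom n A"
    unfolding fst_out_order by blast
  with neq show ?thesis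
    by (intro exI[of _ 2] exI[of _ p] exI[of _ q]) (simp add: out_lit_def out_lit_valid_def)
next
  case (less a b)
  then obtain p q where "a = triple_code p" "b = triple_code q"
    unfolding fst_out_order by blast
  with less show ?thesis
    by (intro exI[of _ 3] exI[of _ p] exI[of _ q]) (simp add: out_lit_def out_lit_valid_def out_order_rel_iff)
next
  case (not_less a b)
  then obtain p q where pq: "a = triple_code p" "b = triple_code q" "p \<in> out_dom n A" "q \<in> out_dom n A"
    unfolding fst_out_order by blast
  with not_less have "\<not> out_less A p q"
    by (simp add: out_order_rel_iff)
  then consider "p = q" | "out_less A q p"
    using out_less_total[OF assms(1) pq(3,4)] by blast
  then show ?thesis
  proof cases
    case 1
    with not_less pq show ?thesis
      by (intro exI[of _ 1] exI[of _ p]) (simp add: out_lit_def out_lit_valid_def)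
  next
    case 2
    with not_less pq show ?thesis
      by (intro exI[of _ 4] exI[of _ q] exI[of _ p]) (simp add: out_lit_def out_lit_valid_def)
  qed
qed

lemma out_lit_in_diag_out_order:
  assumes "is_lo A" and valid: "out_lit_valid n A tag p q"
  shows "out_lit tag (triple_code p) (triple_code q) \<in> diag (out_order n A)"
proof -
  have dom: "triple_code p \<in> fst (out_order n A)" "triple_code q \<in> fst (out_order n A)"
    using valid unfolding out_lit_valid_def fst_out_order by auto
  consider "tag = 0" | "tag = 1" | "tag = 2" | "tag = 3" | "tag = 4"
    using valid unfolding out_lit_valid_def by linarith
  then show ?thesis
  proof cases
    case 2
    then show ?thesis
      using valid dom out_less_irrefl[OF assms(1), of p n]
      unfolding out_lit_def out_lit_valid_def by (simp add: out_order_rel_iff)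
  next
    case 5
    then show ?thesis
      using valid dom out_less_asym[OF assms(1), of p n q]
      unfolding out_lit_def out_lit_valid_def by (simp add: out_order_rel_iff)
  qed (use valid dom in \<open>simp_all add: out_lit_def out_lit_valid_def out_order_rel_iff\<close>)
qed

lemma diag_out_order:
  assumes "is_lo A"
  shows "diag (out_order n A) =
    {out_lit tag (triple_code p) (triple_code q) | tag p q. out_lit_valid n A tag p q}"
  using out_lit_of_diag_out_order[OF assms] out_lit_in_diag_out_order[OF assms] by blast

lemma rule_premises_subset_diag:
  "rule_premises w x v w' x' v' k \<subseteq> diag A \<longleftrightarrow>
    (False, Lt x w) \<in> diag A \<and> (False, Lt v x) \<in> diag A \<and>
    (False, Lt x' w') \<in> diag A \<and> (False, Lt v' x') \<in> diag A \<and> order_lit k x x' w w' \<in> diag A"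
  unfolding rule_premises_def by simp

lemma admissible_iff_diag:
  "admissible A w x \<longleftrightarrow> (\<exists>v. w \<le> v \<and> (False, Lt x w) \<in> diag A \<and> (False, Lt v x) \<in> diag A)"
  unfolding admissible_def by auto

lemma out_lit_valid_of_Gamma:
  assumes "(\<alpha>, \<phi>) \<in> Gamma n" and "\<alpha> \<subseteq> diag A"
  shows "\<exists>tag p q. \<phi> = out_lit tag (triple_code p) (triple_code q) \<and> out_lit_valid n A tag p q"
proof -
  obtain tag i w x v i' w' x' v' k where ok: "rule_ok n tag i w x v i' w' x' v' k"
    and prem: "rule_premises w x v w' x' v' k \<subseteq> diag A"
    and \<phi>: "\<phi> = out_lit tag (triple_code (i, w, x)) (triple_code (i', w', x'))"
    using assms unfolding Gamma_def by blast
  have "(i, w, x) \<in> out_dom n A" "(i', w', x') \<in> out_dom n A"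
    using ok prem admissible_iff_diag[of A w x] admissible_iff_diag[of A w' x']
    unfolding rule_ok_def rule_premises_subset_diag by auto
  moreover have "out_less A (i, w, x) (i', w', x')" if "3 \<le> tag"
    using ok prem that unfolding rule_ok_def rule_premises_subset_diag order_lit_def by auto
  ultimately have "out_lit_valid n A tag (i, w, x) (i', w', x')"
    using ok unfolding rule_ok_def out_lit_valid_def by simp
  then show ?thesis using \<phi> by blast
qed

lemma order_lit_in_diag:
  assumes "admissible A w x" and "admissible A w' x'" and "3 \<le> tag \<Longrightarrow> out_less A (i, w, x) (i', w', x')"
  obtains k where "3 \<le> tag \<longrightarrow> (k = 0 \<and> i < i') \<or> (k = 1 \<and> i = i') \<or> (k = 2 \<and> i = i' \<and> x = x')"
    and "order_lit k x x' w w' \<in> diag A"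
proof (cases "3 \<le> tag")
  case True
  then consider "i < i'" | "i = i'" "(x, x') \<in> snd A" | "i = i'" "x = x'" "(w, w') \<in> snd A"
    using assms(3) by auto
  then show ?thesis
    using that assms(1,2) unfolding order_lit_def admissible_def by cases fastforce+
next
  case False
  then show ?thesis
    using that[of 0] assms(1) unfolding order_lit_def admissible_def by simp
qed

lemma Gamma_derives_out_lit:
  assumes "out_lit_valid n A tag (i, w, x) (i', w', x')"
  shows "out_lit tag (triple_code (i, w, x)) (triple_code (i', w', x')) \<in> enum_apply (Gamma n) (diag A)"
proof -
  have adm: "admissible A w x" "admissible A w' x'"
    using assms unfolding out_lit_valid_def by auto
  then obtain v v' where v: "w \<le> v" "(False, Lt x w) \<in> diag A" "(False, Lt v x) \<in> diag A"
    and v': "w' \<le> v'" "(False, Lt x' w') \<in> diag A" "(False, Lt v' x') \<in> diag A"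
    unfolding admissible_iff_diag by blast
  obtain k where k: "3 \<le> tag \<longrightarrow> (k = 0 \<and> i < i') \<or> (k = 1 \<and> i = i') \<or> (k = 2 \<and> i = i' \<and> x = x')"
    and order: "order_lit k x x' w w' \<in> diag A"
    using order_lit_in_diag[OF adm] assms unfolding out_lit_valid_def by blast
  have "rule_ok n tag i w x v i' w' x' v' k"
    using assms v v' k unfolding out_lit_valid_def rule_ok_def by auto
  moreover have "rule_premises w x v w' x' v' k \<subseteq> diag A"
    using v v' order unfolding rule_premises_subset_diag by blast
  ultimately show ?thesis
    unfolding enum_apply_def Gamma_def by blast
qed

lemma enum_apply_Gamma:
  "enum_apply (Gamma n) (diag A) =
    {out_lit tag (triple_code p) (triple_code q) | tag p q. out_lit_valid n A tag p q}"
    (is "_ = ?lits")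
proof (intro set_eqI iffI)
  fix \<phi> assume "\<phi> \<in> enum_apply (Gamma n) (diag A)"
  then obtain \<alpha> where "(\<alpha>, \<phi>) \<in> Gamma n" "\<alpha> \<subseteq> diag A"
    unfolding enum_apply_def by blast
  then show "\<phi> \<in> ?lits"
    using out_lit_valid_of_Gamma by blast
next
  fix \<phi> assume "\<phi> \<in> ?lits"
  then obtain tag i w x i' w' x' where "out_lit_valid n A tag (i, w, x) (i', w', x')"
    and "\<phi> = out_lit tag (triple_code (i, w, x)) (triple_code (i', w', x'))"
    by (auto simp: split_paired_all)
  then show "\<phi> \<in> enum_apply (Gamma n) (diag A)"
    using Gamma_derives_out_lit by simp
qed

lemma enum_apply_Gamma_diag:
  assumes "is_lo A"
  shows "enum_apply (Gamma n) (diag A) = diag (out_order n A)"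
  using enum_apply_Gamma diag_out_order[OF assms] by simp

lemma eq_out_order_of_enum_apply_Gamma:
  assumes "is_lo A" and "is_lo B" and "enum_apply (Gamma n) (diag A) = diag B"
  shows "B = out_order n A"
  using diag_inj[OF assms(2) is_lo_out_order[OF assms(1)]] enum_apply_Gamma_diag[OF assms(1)] assms(3)
  by simp

abbreviation omega_times_2 :: "(nat \<times> nat) lo" where
  "omega_times_2 \<equiv> lo_mult omega (fin_ord 2)"

abbreviation omega_star_times_2 :: "(nat \<times> nat) lo" where
  "omega_star_times_2 \<equiv> lo_mult (lo_rev omega) (fin_ord 2)"

abbreviation omega_sq_times :: "nat \<Rightarrow> (nat \<times> nat \<times> nat) lo" where
  "omega_sq_times n \<equiv> lo_mult (lo_mult omega omega) (fin_ord n)"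

abbreviation omega_sq_star_times :: "nat \<Rightarrow> (nat \<times> nat \<times> nat) lo" where
  "omega_sq_star_times n \<equiv> lo_mult (lo_rev (lo_mult omega omega)) (fin_ord n)"

lemma has_least_omega: "has_least omega"
  unfolding has_least_def omega_def by auto

lemma has_least_fin_ord: "1 \<le> n \<Longrightarrow> has_least (fin_ord n)"
  unfolding has_least_def fin_ord_def by auto

lemma irrefl_fin_ord: "\<forall>m\<in>fst (fin_ord n). (m, m) \<notin> snd (fin_ord n)"
  unfolding fin_ord_def by simp

lemma has_least_omega_times_2: "has_least omega_times_2"
  by (intro has_least_lo_mult has_least_omega has_least_fin_ord) simp

lemma not_has_least_omega_star_times_2: "\<not> has_least omega_star_times_2"
proof (rule not_has_least_lo_mult[OF irrefl_fin_ord], intro ballI)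
  fix l assume "l \<in> fst (lo_rev omega)"
  then show "\<exists>l'\<in>fst (lo_rev omega). l' \<noteq> l \<and> (l, l') \<notin> snd (lo_rev omega)"
    by (intro bexI[of _ "Suc l"]) (auto simp: lo_rev_def omega_def)
qed

lemma has_least_omega_sq_times: "1 \<le> n \<Longrightarrow> has_least (omega_sq_times n)"
  by (intro has_least_lo_mult has_least_omega has_least_fin_ord)

lemma not_has_least_omega_sq_star_times: "\<not> has_least (omega_sq_star_times n)"
proof (rule not_has_least_lo_mult[OF irrefl_fin_ord], intro ballI)
  fix l assume "l \<in> fst (lo_rev (lo_mult omega omega))"
  then show "\<exists>l'\<in>fst (lo_rev (lo_mult omega omega)). l' \<noteq> l \<and> (l, l') \<notin> snd (lo_rev (lo_mult omega omega))"
    by (intro bexI[of _ "(fst l, Suc (snd l))"]) (auto simp: lo_rev_def lo_mult_def omega_def prod_eq_iff)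
qed

lemma omega_sq_times_dom: "fst (omega_sq_times n) = {..<n} \<times> UNIV"
  and omega_sq_star_times_dom: "fst (omega_sq_star_times n) = {..<n} \<times> UNIV"
  unfolding lo_mult_def omega_def fin_ord_def lo_rev_def by auto

lemma omega_sq_times_rel:
  "((i, k, m), (i', k', m')) \<in> snd (omega_sq_times n) \<longleftrightarrow>
     i < n \<and> i' < n \<and> (i < i' \<or> (i = i' \<and> (k < k' \<or> (k = k' \<and> m < m'))))"
  unfolding lo_mult_def omega_def fin_ord_def by auto

lemma omega_sq_star_times_rel:
  "((i, k, m), (i', k', m')) \<in> snd (omega_sq_star_times n) \<longleftrightarrow>
     i < n \<and> i' < n \<and> (i < i' \<or> (i = i' \<and> (k' < k \<or> (k' = k \<and> m' < m))))"
  unfolding lo_mult_def omega_def fin_ord_def lo_rev_def by auto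

section \<open>Orders made of blocks of type omega\<close>

definition rank_in :: "'a lo \<Rightarrow> 'a set \<Rightarrow> 'a \<Rightarrow> nat" where
  "rank_in L F x = card {y\<in>F. (y, x) \<in> snd L}"

locale finite_predecessors =
  fixes L :: "'a lo" and F :: "'a set"
  assumes lo: "is_lo L" and subset: "F \<subseteq> fst L"
    and finite_below: "\<And>x. x \<in> F \<Longrightarrow> finite {y\<in>F. (y, x) \<in> snd L}"
begin

lemma rank_in_strict_mono:
  assumes "x \<in> F" "y \<in> F" "(x, y) \<in> snd L"
  shows "rank_in L F x < rank_in L F y"
proof -
  have "{z\<in>F. (z, x) \<in> snd L} \<subseteq> {z\<in>F. (z, y) \<in> snd L}"
    using assms(3) lo unfolding is_lo_def by (auto dest: transD)
  moreover have "x \<in> {z\<in>F. (z, y) \<in> snd L}" "x \<notin> {z\<in>F. (z, x) \<in> snd L}"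
    using assms lo subset unfolding is_lo_def by auto
  ultimately have "{z\<in>F. (z, x) \<in> snd L} \<subset> {z\<in>F. (z, y) \<in> snd L}"
    by blast
  then show ?thesis
    unfolding rank_in_def using finite_below[OF assms(2)] by (simp add: psubset_card_mono)
qed

lemma F_total: "x \<in> F \<Longrightarrow> y \<in> F \<Longrightarrow> x = y \<or> (x, y) \<in> snd L \<or> (y, x) \<in> snd L"
  using lo subset unfolding is_lo_def by blast

lemma rank_in_less_iff: "x \<in> F \<Longrightarrow> y \<in> F \<Longrightarrow> (x, y) \<in> snd L \<longleftrightarrow> rank_in L F x < rank_in L F y"
  using rank_in_strict_mono[of x y] rank_in_strict_mono[of y x] F_total[of x y] by auto

lemma inj_on_rank_in: "inj_on (rank_in L F) F"
  by (rule inj_onI) (use F_total rank_in_strict_mono in fastforce)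

lemma bij_betw_rank_in:
  assumes "infinite F"
  shows "bij_betw (rank_in L F) F UNIV"
proof -
  have down_closed: "m \<in> rank_in L F ` F" if "x \<in> F" "m < rank_in L F x" for x m
  proof -
    define P where "P = {z\<in>F. (z, x) \<in> snd L}"
    have "rank_in L F ` P \<subseteq> {..<rank_in L F x}"
      unfolding P_def using rank_in_strict_mono that(1) by auto
    moreover have "card (rank_in L F ` P) = card {..<rank_in L F x}"
      using card_image[OF inj_on_subset[OF inj_on_rank_in]] unfolding P_def rank_in_def by auto
    ultimately have "rank_in L F ` P = {..<rank_in L F x}"
      using finite_below[OF that(1)] unfolding P_def by (intro card_subset_eq) auto
    then show ?thesis using that(2) unfolding P_def by auto
  qed
  have "infinite (rank_in L F ` F)"
    using inj_on_rank_in assms finite_imageD by blast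
  then have "\<exists>x\<in>F. m < rank_in L F x" for m
    unfolding infinite_nat_iff_unbounded by blast
  then have "rank_in L F ` F = UNIV"
    using down_closed by blast
  then show ?thesis
    using inj_on_rank_in unfolding bij_betw_def by simp
qed

end

definition block_rank :: "'a lo \<Rightarrow> ('a \<Rightarrow> 'b) \<Rightarrow> 'a \<Rightarrow> nat" where
  "block_rank L blk x = rank_in L {y\<in>fst L. blk y = blk x} x"

locale blocks =
  fixes L :: "'a lo" and blk :: "'a \<Rightarrow> nat \<times> nat" and n :: nat
  assumes lo: "is_lo L"
    and blk_range: "\<And>x. x \<in> fst L \<Longrightarrow> fst (blk x) < n"
    and block_infinite: "\<And>i k. i < n \<Longrightarrow> infinite {x\<in>fst L. blk x = (i, k)}"
    and block_finite_below: "\<And>x. x \<in> fst L \<Longrightarrow> finite {y\<in>fst L. blk y = blk x \<and> (y, x) \<in> snd L}"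
begin

lemma finite_predecessors_block: "finite_predecessors L {x\<in>fst L. blk x = b}"
proof
  fix x assume "x \<in> {x\<in>fst L. blk x = b}"
  then have "{y\<in>{x\<in>fst L. blk x = b}. (y, x) \<in> snd L} = {y\<in>fst L. blk y = blk x \<and> (y, x) \<in> snd L}"
    by auto
  then show "finite {y\<in>{x\<in>fst L. blk x = b}. (y, x) \<in> snd L}"
    using block_finite_below[of x] \<open>x \<in> {x\<in>fst L. blk x = b}\<close> by simp
qed (use lo in auto)

lemma block_rank_less_iff:
  assumes "x \<in> fst L" "y \<in> fst L" "blk x = blk y"
  shows "(x, y) \<in> snd L \<longleftrightarrow> block_rank L blk x < block_rank L blk y"
  using finite_predecessors.rank_in_less_iff[OF finite_predecessors_block, of x "blk x" y] assms
  unfolding block_rank_def by simp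

lemma bij_betw_block_coords:
  "bij_betw (\<lambda>x. (fst (blk x), snd (blk x), block_rank L blk x)) (fst L) ({..<n} \<times> UNIV)"
  unfolding bij_betw_def
proof
  show "inj_on (\<lambda>x. (fst (blk x), snd (blk x), block_rank L blk x)) (fst L)"
  proof (rule inj_onI)
    fix x y assume xy: "x \<in> fst L" "y \<in> fst L"
      and "(fst (blk x), snd (blk x), block_rank L blk x) = (fst (blk y), snd (blk y), block_rank L blk y)"
    then have "blk x = blk y" "block_rank L blk x = block_rank L blk y"
      by (auto simp: prod_eq_iff)
    moreover have "x = y \<or> (x, y) \<in> snd L \<or> (y, x) \<in> snd L"
      using lo xy unfolding is_lo_def by blast
    ultimately show "x = y"
      using block_rank_less_iff[OF xy] block_rank_less_iff[OF xy(2,1)] by auto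
  qed
  show "(\<lambda>x. (fst (blk x), snd (blk x), block_rank L blk x)) ` fst L = {..<n} \<times> UNIV"
  proof (intro set_eqI iffI)
    fix z assume "z \<in> (\<lambda>x. (fst (blk x), snd (blk x), block_rank L blk x)) ` fst L"
    then show "z \<in> {..<n} \<times> UNIV" using blk_range by auto
  next
    fix z :: "nat \<times> nat \<times> nat" assume "z \<in> {..<n} \<times> UNIV"
    then obtain i k m where z: "z = (i, k, m)" "i < n" by (cases z) auto
    let ?B = "{x\<in>fst L. blk x = (i, k)}"
    have "m \<in> rank_in L ?B ` ?B"
      using finite_predecessors.bij_betw_rank_in[OF finite_predecessors_block block_infinite[OF z(2)]]
      unfolding bij_betw_def by simp
    then obtain x where "x \<in> ?B" "rank_in L ?B x = m"
      by blast
    then have "x \<in> fst L" "(fst (blk x), snd (blk x), block_rank L blk x) = z"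
      unfolding block_rank_def z by auto
    then show "z \<in> (\<lambda>x. (fst (blk x), snd (blk x), block_rank L blk x)) ` fst L"
      by force
  qed
qed

end

lemma lo_iso_omega_sq_times_by_blocks:
  assumes "blocks L blk n"
    and mono: "\<And>x y. x \<in> fst L \<Longrightarrow> y \<in> fst L \<Longrightarrow> (x, y) \<in> snd L \<Longrightarrow>
      fst (blk x) < fst (blk y) \<or> (fst (blk x) = fst (blk y) \<and> snd (blk x) \<le> snd (blk y))"
  shows "lo_iso L (omega_sq_times n)"
proof -
  interpret blocks L blk n by fact
  show ?thesis
  proof (rule lo_iso_of_mono_bij[OF lo])
    show "bij_betw (\<lambda>x. (fst (blk x), snd (blk x), block_rank L blk x)) (fst L) (fst (omega_sq_times n))"
      using bij_betw_block_coords by (simp add: omega_sq_times_dom)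
    show "(b, a) \<notin> snd (omega_sq_times n)" if "(a, b) \<in> snd (omega_sq_times n)" for a b
      using that by (cases a, cases b) (auto simp: omega_sq_times_rel)
    show "((fst (blk x), snd (blk x), block_rank L blk x), (fst (blk y), snd (blk y), block_rank L blk y))
        \<in> snd (omega_sq_times n)" if "x \<in> fst L" "y \<in> fst L" "(x, y) \<in> snd L" for x y
      using block_rank_less_iff[of x y] mono[of x y] blk_range that
      by (auto simp: omega_sq_times_rel prod_eq_iff)
  qed
qed

lemma is_lo_lo_rev: "is_lo L \<Longrightarrow> is_lo (lo_rev L)"
  unfolding is_lo_def lo_rev_def by auto

lemma lo_iso_omega_sq_star_times_by_blocks:
  assumes "blocks (lo_rev L) blk n"
    and mono: "\<And>x y. x \<in> fst L \<Longrightarrow> y \<in> fst L \<Longrightarrow> (x, y) \<in> snd L \<Longrightarrow>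
      fst (blk x) < fst (blk y) \<or> (fst (blk x) = fst (blk y) \<and> snd (blk y) \<le> snd (blk x))"
    and "is_lo L"
  shows "lo_iso L (omega_sq_star_times n)"
proof -
  interpret blocks "lo_rev L" blk n by fact
  have [simp]: "fst (lo_rev L) = fst L" "(x, y) \<in> snd (lo_rev L) \<longleftrightarrow> (y, x) \<in> snd L" for x y
    unfolding lo_rev_def by auto
  show ?thesis
  proof (rule lo_iso_of_mono_bij[OF \<open>is_lo L\<close>])
    show "bij_betw (\<lambda>x. (fst (blk x), snd (blk x), block_rank (lo_rev L) blk x)) (fst L)
        (fst (omega_sq_star_times n))"
      using bij_betw_block_coords by (simp add: omega_sq_star_times_dom)
    show "(b, a) \<notin> snd (omega_sq_star_times n)" if "(a, b) \<in> snd (omega_sq_star_times n)" for a b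
      using that by (cases a, cases b) (auto simp: omega_sq_star_times_rel)
    show "((fst (blk x), snd (blk x), block_rank (lo_rev L) blk x),
        (fst (blk y), snd (blk y), block_rank (lo_rev L) blk y)) \<in> snd (omega_sq_star_times n)"
      if "x \<in> fst L" "y \<in> fst L" "(x, y) \<in> snd L" for x y
      using block_rank_less_iff[of y x] mono[of x y] blk_range that
      by (auto simp: omega_sq_star_times_rel prod_eq_iff)
  qed
qed

section \<open>The images of omega*2 and omega^star*2\<close>

lemma lo_iso_lo_mult_2_coords:
  assumes iso: "lo_iso A (lo_mult L (fin_ord 2))" and dom: "fst L = UNIV"
  obtains part :: "'a \<Rightarrow> nat" and pos :: "'a \<Rightarrow> 'b"
  where "\<And>x. x \<in> fst A \<Longrightarrow> part x < 2"
    and "\<And>x y. x \<in> fst A \<Longrightarrow> y \<in> fst A \<Longrightarrow>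
      (x, y) \<in> snd A \<longleftrightarrow> part x < part y \<or> (part x = part y \<and> (pos x, pos y) \<in> snd L)"
    and "\<And>x y. x \<in> fst A \<Longrightarrow> y \<in> fst A \<Longrightarrow> part x = part y \<Longrightarrow> pos x = pos y \<Longrightarrow> x = y"
    and "\<And>s m. s < 2 \<Longrightarrow> \<exists>x\<in>fst A. part x = s \<and> pos x = m"
proof -
  obtain f where f: "bij_betw f (fst A) (fst (lo_mult L (fin_ord 2)))"
    and rel: "\<forall>x\<in>fst A. \<forall>y\<in>fst A. (x, y) \<in> snd A \<longleftrightarrow> (f x, f y) \<in> snd (lo_mult L (fin_ord 2))"
    using iso unfolding lo_iso_def by blast
  have f_dom: "fst (lo_mult L (fin_ord 2)) = {..<2} \<times> UNIV"
    using dom unfolding lo_mult_def fin_ord_def by auto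
  have f_rel: "(p, q) \<in> snd (lo_mult L (fin_ord 2)) \<longleftrightarrow>
      fst p < 2 \<and> fst q < 2 \<and> (fst p < fst q \<or> (fst p = fst q \<and> (snd p, snd q) \<in> snd L))" for p q
    using dom unfolding lo_mult_def fin_ord_def by (cases p, cases q) auto
  show ?thesis
  proof (rule that[of "\<lambda>x. fst (f x)" "\<lambda>x. snd (f x)"])
    show part: "fst (f x) < 2" if "x \<in> fst A" for x
      using bij_betwE[OF f] that unfolding f_dom by (simp add: mem_Times_iff)
    show "(x, y) \<in> snd A \<longleftrightarrow>
        fst (f x) < fst (f y) \<or> (fst (f x) = fst (f y) \<and> (snd (f x), snd (f y)) \<in> snd L)"
      if "x \<in> fst A" "y \<in> fst A" for x y
      using rel that f_rel[of "f x" "f y"] part[OF that(1)] part[OF that(2)] by simp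
    show "x = y" if "x \<in> fst A" "y \<in> fst A" "fst (f x) = fst (f y)" "snd (f x) = snd (f y)" for x y
      using that bij_betw_imp_inj_on[OF f] unfolding inj_on_def by (simp add: prod_eq_iff)
    show "\<exists>x\<in>fst A. fst (f x) = s \<and> snd (f x) = m" if "s < 2" for s m
    proof -
      have "(s, m) \<in> f ` fst A" using f f_dom that unfolding bij_betw_def by auto
      then obtain x where "x \<in> fst A" "f x = (s, m)" by (metis imageE)
      then show ?thesis by (intro bexI[of _ x]) simp_all
    qed
  qed
qed

(* Coordinates on an order of type L*2: part x < 2 is the copy containing x, pos x its place in L. *)
locale two_copies =
  fixes A :: "nat lo" and part pos :: "nat \<Rightarrow> nat"
  assumes lo: "is_lo A"
    and part_less_2: "x \<in> fst A \<Longrightarrow> part x < 2"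
    and coords_inj: "x \<in> fst A \<Longrightarrow> y \<in> fst A \<Longrightarrow> part x = part y \<Longrightarrow> pos x = pos y \<Longrightarrow> x = y"
    and coords_surj: "s < 2 \<Longrightarrow> \<exists>x\<in>fst A. part x = s \<and> pos x = m"
begin

definition elem :: "nat \<Rightarrow> nat \<Rightarrow> nat" where
  "elem s m = (SOME x. x \<in> fst A \<and> part x = s \<and> pos x = m)"

lemma elem_spec: "s < 2 \<Longrightarrow> elem s m \<in> fst A \<and> part (elem s m) = s \<and> pos (elem s m) = m"
  unfolding elem_def using someI_ex[OF coords_surj[unfolded Bex_def]] by blast

lemma finite_pos_le: "finite {y\<in>fst A. pos y \<le> N}"
proof (rule finite_subset)
  show "{y\<in>fst A. pos y \<le> N} \<subseteq> (\<lambda>(s, m). elem s m) ` ({..<2} \<times> {..N})"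
  proof
    fix y assume y: "y \<in> {y\<in>fst A. pos y \<le> N}"
    then have "elem (part y) (pos y) = y"
      using elem_spec[of "part y" "pos y"] part_less_2 coords_inj by auto
    then show "y \<in> (\<lambda>(s, m). elem s m) ` ({..<2} \<times> {..N})"
      using y part_less_2 by (intro image_eqI[of _ _ "(part y, pos y)"]) auto
  qed
qed simp

lemma infinite_copy:
  assumes "s < 2"
  shows "infinite {y\<in>fst A. part y = s \<and> m \<le> pos y}"
proof
  assume "finite {y\<in>fst A. part y = s \<and> m \<le> pos y}"
  moreover have "{m..} \<subseteq> pos ` {y\<in>fst A. part y = s \<and> m \<le> pos y}"
  proof
    fix k assume "k \<in> {m..}"
    then show "k \<in> pos ` {y\<in>fst A. part y = s \<and> m \<le> pos y}"
      using elem_spec[OF assms, of k] by (intro image_eqI[of _ _ "elem s k"]) auto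
  qed
  ultimately have "finite {m..}"
    using finite_subset finite_imageI by blast
  then show False using infinite_Ici by blast
qed

lemma exists_large:
  assumes "s < 2"
  obtains v where "v \<in> fst A" "part v = s" "m \<le> pos v" "w \<le> v"
proof -
  obtain v where "v \<in> {y\<in>fst A. part y = s \<and> m \<le> pos y}" "w \<le> v"
    using infinite_copy[OF assms, of m] unfolding infinite_nat_iff_unbounded_le by blast
  then show ?thesis using that by blast
qed

end

locale omega_copies = two_copies +
  assumes less_iff: "x \<in> fst A \<Longrightarrow> y \<in> fst A \<Longrightarrow>
    (x, y) \<in> snd A \<longleftrightarrow> part x < part y \<or> (part x = part y \<and> pos x < pos y)"
begin

lemma admissible_iff: "admissible A w x \<longleftrightarrow> w \<in> fst A \<and> x \<in> fst A \<and> (x, w) \<notin> snd A"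
proof -
  have "\<exists>v\<in>fst A. (v, x) \<notin> snd A \<and> w \<le> v" if "x \<in> fst A"
  proof -
    obtain v where "v \<in> fst A" "part v = 1" "Suc (pos x) \<le> pos v" "w \<le> v"
      using exists_large[of 1] by auto
    then show ?thesis
      using less_iff[of v x] part_less_2[of x] that by auto
  qed
  then show ?thesis unfolding admissible_def by blast
qed

(* Block k + 1 holds the pairs (w, x) with x in the second copy and pos x + part w = k: finitely
   many with w in the second copy, followed by omega many with w in the first. *)
fun blk :: "nat \<times> nat \<times> nat \<Rightarrow> nat \<times> nat" where
  "blk (i, w, x) = (i, if part x = 0 then 0 else Suc (pos x + part w))"

lemma blocks_infinite:
  assumes "i < n"
  shows "infinite {p\<in>out_dom n A. blk p = (i, k)}"
proof -
  let ?S = "{y\<in>fst A. part y = 0 \<and> 0 \<le> pos y}"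
  obtain f where f: "inj f" and sub: "f ` ?S \<subseteq> {p\<in>out_dom n A. blk p = (i, k)}"
  proof (cases k)
    case 0
    have "(\<lambda>x. (i, x, x)) ` ?S \<subseteq> {p\<in>out_dom n A. blk p = (i, k)}"
      using assms 0 less_iff by (auto simp: admissible_iff)
    then show ?thesis using that[of "\<lambda>x. (i, x, x)"] by (simp add: inj_def)
  next
    case (Suc m)
    define c where "c = elem 1 m"
    have c: "c \<in> fst A" "part c = 1" "pos c = m" using elem_spec[of 1 m] unfolding c_def by auto
    have "(\<lambda>w. (i, w, c)) ` ?S \<subseteq> {p\<in>out_dom n A. blk p = (i, k)}"
      using assms Suc c less_iff by (auto simp: admissible_iff)
    then show ?thesis using that[of "\<lambda>w. (i, w, c)"] by (simp add: inj_def)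
  qed
  have "infinite (f ` ?S)"
    using infinite_copy[of 0 0] finite_image_iff[OF inj_on_subset[OF f subset_UNIV]] by simp
  then show ?thesis
    using sub finite_subset by blast
qed

lemma out_dom_iff_coords:
  "(i, w, x) \<in> out_dom n A \<longleftrightarrow> i < n \<and> w \<in> fst A \<and> x \<in> fst A \<and>
    (part w < part x \<or> (part w = part x \<and> pos w \<le> pos x))"
  using less_iff[of x w] part_less_2[of x] part_less_2[of w] by (auto simp: admissible_iff)

lemma out_less_iff_coords:
  assumes "x \<in> fst A" "x' \<in> fst A" "w \<in> fst A" "w' \<in> fst A"
  shows "out_less A (i, w, x) (i', w', x') \<longleftrightarrow> i < i' \<or> (i = i' \<and>
    (part x < part x' \<or> (part x = part x' \<and> pos x < pos x') \<or> (x = x' \<and> (part w < part w' \<or> (part w = part w' \<and> pos w < pos w')))))"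
  using less_iff assms by auto

lemma block_predecessor_bound:
  assumes p: "(i, w, x) \<in> out_dom n A" and q: "(i', w', x') \<in> out_dom n A"
    and same: "blk (i', w', x') = blk (i, w, x)" and less: "out_less A (i', w', x') (i, w, x)"
  shows "i' = i \<and> pos w' \<le> pos w + pos x + 1 \<and> pos x' \<le> pos w + pos x + 1"
proof -
  have dom: "w \<in> fst A" "x \<in> fst A" "w' \<in> fst A" "x' \<in> fst A"
    using p q unfolding out_dom_iff_coords by auto
  have "part w < 2" "part x < 2" "part w' < 2" "part x' < 2"
    using dom part_less_2 by auto
  moreover have "x' = x" if "part x' = part x" "pos x' = pos x"
    using coords_inj[OF dom(4,2)] that by simp
  ultimately show ?thesis
    using p q same less unfolding out_dom_iff_coords out_less_iff_coords[OF dom(4,2,3,1)]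
    by (auto split: if_splits)
qed

lemma block_predecessors_finite:
  assumes "p \<in> out_dom n A"
  shows "finite {q\<in>out_dom n A. blk q = blk p \<and> out_less A q p}"
proof -
  obtain i w x where p: "p = (i, w, x)" by (cases p)
  define N where "N = pos w + pos x + 1"
  have "{q\<in>out_dom n A. blk q = blk p \<and> out_less A q p} \<subseteq>
      {i} \<times> {y\<in>fst A. pos y \<le> N} \<times> {y\<in>fst A. pos y \<le> N}"
  proof
    fix q assume "q \<in> {q\<in>out_dom n A. blk q = blk p \<and> out_less A q p}"
    then obtain i' w' x' where q: "q = (i', w', x')" "(i', w', x') \<in> out_dom n A"
      "blk (i', w', x') = blk p" "out_less A (i', w', x') p"
      by (cases q) auto
    then show "q \<in> {i} \<times> {y\<in>fst A. pos y \<le> N} \<times> {y\<in>fst A. pos y \<le> N}"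
    proof -
      have "i' = i \<and> pos w' \<le> N \<and> pos x' \<le> N"
        using block_predecessor_bound[of i w x n i' w' x'] assms q unfolding p N_def by blast
      moreover have "w' \<in> fst A" "x' \<in> fst A"
        using q(2) unfolding out_dom_iff_coords by auto
      ultimately show ?thesis using q(1) by simp
    qed
  qed
  then show ?thesis
    by (rule finite_subset) (intro finite_cartesian_product finite_pos_le finite.intros)
qed

lemma blk_mono:
  assumes "p \<in> out_dom n A" "q \<in> out_dom n A" "out_less A p q"
  shows "fst (blk p) < fst (blk q) \<or> (fst (blk p) = fst (blk q) \<and> snd (blk p) \<le> snd (blk q))"
proof -
  obtain i w x i' w' x' where pq: "p = (i, w, x)" "q = (i', w', x')" by (cases p, cases q)
  have dom: "w \<in> fst A" "x \<in> fst A" "w' \<in> fst A" "x' \<in> fst A"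
    using assms unfolding pq out_dom_iff_coords by auto
  have "part w < 2" "part x < 2" "part w' < 2" "part x' < 2"
    using dom part_less_2 by auto
  then show ?thesis
    using assms unfolding pq out_dom_iff_coords out_less_iff_coords[OF dom(2,4,1,3)]
    by (auto split: if_splits)
qed

theorem lo_iso_triple_order: "lo_iso (triple_order n A) (omega_sq_times n)"
proof (rule lo_iso_omega_sq_times_by_blocks[where blk = blk])
  show "blocks (triple_order n A) blk n"
  proof
    show "is_lo (triple_order n A)" using is_lo_triple_order[OF lo] .
    show "fst (blk p) < n" if "p \<in> fst (triple_order n A)" for p
      using that by (cases p) simp
    show "infinite {p\<in>fst (triple_order n A). blk p = (i, k)}" if "i < n" for i k
      using blocks_infinite[OF that] by simp
    show "finite {q\<in>fst (triple_order n A). blk q = blk p \<and> (q, p) \<in> snd (triple_order n A)}"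
      if "p \<in> fst (triple_order n A)" for p
    proof -
      have "{q\<in>fst (triple_order n A). blk q = blk p \<and> (q, p) \<in> snd (triple_order n A)} =
          {q\<in>out_dom n A. blk q = blk p \<and> out_less A q p}"
        using that by auto
      then show ?thesis using block_predecessors_finite that by simp
    qed
  qed
qed (use blk_mono in simp)

end

locale omega_star_copies = two_copies +
  assumes less_iff: "x \<in> fst A \<Longrightarrow> y \<in> fst A \<Longrightarrow>
    (x, y) \<in> snd A \<longleftrightarrow> part x < part y \<or> (part x = part y \<and> pos y < pos x)"
begin

lemma not_less_iff: "x \<in> fst A \<Longrightarrow> y \<in> fst A \<Longrightarrow>
    (x, y) \<notin> snd A \<longleftrightarrow> part y < part x \<or> (part y = part x \<and> pos x \<le> pos y)"
  using less_iff by auto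

(* Block 0 holds the pairs with x in the second copy; each such x has only finitely many
   admissible w, and ordered by x these finite segments form an omega^star. Block k + 1 holds
   the omega^star of pairs whose x is at position k of the first copy. *)
fun blk :: "nat \<times> nat \<times> nat \<Rightarrow> nat \<times> nat" where
  "blk (i, w, x) = (i, if part x = 1 then 0 else Suc (pos x))"

lemma blocks_infinite:
  assumes "i < n"
  shows "infinite {p\<in>out_dom n A. blk p = (i, k)}"
proof -
  obtain s m f where s: "s < 2" and f: "inj f"
    and sub: "f ` {y\<in>fst A. part y = s \<and> m \<le> pos y} \<subseteq> {p\<in>out_dom n A. blk p = (i, k)}"
  proof (cases k)
    case 0
    have "(\<lambda>x. (i, x, x)) ` {y\<in>fst A. part y = 1 \<and> 0 \<le> pos y} \<subseteq> {p\<in>out_dom n A. blk p = (i, k)}"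
      using assms 0 admissible_self[OF lo] by auto
    then show ?thesis using that[where s=1 and m=0 and f="\<lambda>x. (i, x, x)"] by (simp add: inj_def)
  next
    case (Suc m)
    define c where "c = elem 0 m"
    have c: "c \<in> fst A" "part c = 0" "pos c = m" using elem_spec[of 0 m] unfolding c_def by auto
    have "(i, w, c) \<in> out_dom n A" if "w \<in> fst A" "part w = 0" "m \<le> pos w" for w
    proof -
      obtain v where v: "v \<in> fst A" "part v = 1" "w \<le> v"
        using exists_large[of 1 0 w] by auto
      then show ?thesis
        using assms that c not_less_iff[of c w] not_less_iff[of v c] by (auto simp: admissible_def)
    qed
    then have "(\<lambda>w. (i, w, c)) ` {y\<in>fst A. part y = 0 \<and> m \<le> pos y} \<subseteq> {p\<in>out_dom n A. blk p = (i, k)}"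
      using Suc c by auto
    then show ?thesis using that[where s=0 and m=m and f="\<lambda>w. (i, w, c)"] by (simp add: inj_def)
  qed
  have "infinite (f ` {y\<in>fst A. part y = s \<and> m \<le> pos y})"
    using infinite_copy[OF s] finite_image_iff[OF inj_on_subset[OF f subset_UNIV]] by simp
  then show ?thesis
    using sub finite_subset by blast
qed

lemma block_successor_bound:
  assumes p: "(i, w, x) \<in> out_dom n A" and q: "(i', w', x') \<in> out_dom n A"
    and same: "blk (i', w', x') = blk (i, w, x)" and less: "out_less A (i, w, x) (i', w', x')"
  shows "i' = i \<and> pos x' \<le> pos x \<and> (w' \<le> Max {y\<in>fst A. pos y \<le> pos x} \<or> pos w' \<le> pos w)"
proof -
  have wx: "w \<in> fst A" "x \<in> fst A" "(x, w) \<notin> snd A"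
    using p by (auto simp: admissible_def)
  obtain v' where wx': "w' \<in> fst A" "x' \<in> fst A" "(x', w') \<notin> snd A"
    and v': "v' \<in> fst A" "(v', x') \<notin> snd A" "w' \<le> v'"
    using q by (auto simp: admissible_def)
  have part: "part w < 2" "part x < 2" "part w' < 2" "part x' < 2" "part v' < 2"
    using wx wx' v' part_less_2 by auto
  have i': "i' = i" using same by simp
  then have order: "(x, x') \<in> snd A \<or> (x = x' \<and> (w, w') \<in> snd A)"
    using less by simp
  have x': "pos x' \<le> pos x"
    using order same part less_iff[OF wx(2) wx'(2)] by (auto split: if_splits)
  have "w' \<le> Max {y\<in>fst A. pos y \<le> pos x} \<or> pos w' \<le> pos w"
  proof (cases "part x = 1")
    case True
    then have "part x' = 1" using same part by (auto split: if_splits)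
    then have "pos v' \<le> pos x"
      using v'(2) not_less_iff[OF v'(1) wx'(2)] part x' by auto
    then have "v' \<le> Max {y\<in>fst A. pos y \<le> pos x}"
      using v'(1) finite_pos_le by (intro Max_ge) auto
    then show ?thesis using v'(3) by simp
  next
    case False
    then have "part x = 0" "part x' = 0" "pos x' = pos x"
      using same part by (auto split: if_splits)
    then have "x' = x" using coords_inj[OF wx'(2) wx(2)] by simp
    then have "(w, w') \<in> snd A" "part w = 0" "part w' = 0"
      using order not_less_iff[OF wx(2,1)] not_less_iff[OF wx'(2,1)] wx(3) wx'(3)
        \<open>part x = 0\<close> less_iff[OF wx(2) wx(2)] by auto
    then show ?thesis using less_iff[OF wx(1) wx'(1)] by simp
  qed
  with i' x' show ?thesis by blast
qed

lemma block_successors_finite: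
  assumes "p \<in> out_dom n A"
  shows "finite {q\<in>out_dom n A. blk q = blk p \<and> out_less A p q}"
proof -
  obtain i w x where p: "p = (i, w, x)" by (cases p)
  define M where "M = Max {y\<in>fst A. pos y \<le> pos x}"
  have "{q\<in>out_dom n A. blk q = blk p \<and> out_less A p q} \<subseteq>
      {i} \<times> ({..M} \<union> {y\<in>fst A. pos y \<le> pos w}) \<times> {y\<in>fst A. pos y \<le> pos x}"
  proof
    fix q assume "q \<in> {q\<in>out_dom n A. blk q = blk p \<and> out_less A p q}"
    then obtain i' w' x' where q: "q = (i', w', x')" "(i', w', x') \<in> out_dom n A"
      "blk (i', w', x') = blk p" "out_less A p (i', w', x')"
      by (cases q) auto
    then show "q \<in> {i} \<times> ({..M} \<union> {y\<in>fst A. pos y \<le> pos w}) \<times> {y\<in>fst A. pos y \<le> pos x}"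
      using block_successor_bound[of i w x n i' w' x'] assms admissible_in_dom[of A w' x']
      unfolding p M_def by simp
  qed
  then show ?thesis
    by (rule finite_subset) (intro finite_cartesian_product finite_UnI finite_atMost finite_pos_le finite.intros)
qed

lemma blk_mono:
  assumes "p \<in> out_dom n A" "q \<in> out_dom n A" "out_less A p q"
  shows "fst (blk p) < fst (blk q) \<or> (fst (blk p) = fst (blk q) \<and> snd (blk q) \<le> snd (blk p))"
proof -
  obtain i w x i' w' x' where pq: "p = (i, w, x)" "q = (i', w', x')" by (cases p, cases q)
  have dom: "x \<in> fst A" "x' \<in> fst A"
    using assms unfolding pq by (auto simp: admissible_def)
  have "part x < 2" "part x' < 2"
    using dom part_less_2 by auto
  then show ?thesis
    using assms(3) less_iff[OF dom] unfolding pq by (auto split: if_splits)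
qed

theorem lo_iso_triple_order: "lo_iso (triple_order n A) (omega_sq_star_times n)"
proof (rule lo_iso_omega_sq_star_times_by_blocks[where blk = blk])
  show "is_lo (triple_order n A)" using is_lo_triple_order[OF lo] .
  show "blocks (lo_rev (triple_order n A)) blk n"
  proof
    show "is_lo (lo_rev (triple_order n A))" using is_lo_lo_rev is_lo_triple_order[OF lo] .
    show "fst (blk p) < n" if "p \<in> fst (lo_rev (triple_order n A))" for p
      using that by (cases p) (simp add: lo_rev_def)
    show "infinite {p\<in>fst (lo_rev (triple_order n A)). blk p = (i, k)}" if "i < n" for i k
      using blocks_infinite[OF that] by (simp add: lo_rev_def)
    show "finite {q\<in>fst (lo_rev (triple_order n A)). blk q = blk p \<and> (q, p) \<in> snd (lo_rev (triple_order n A))}"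
      if "p \<in> fst (lo_rev (triple_order n A))" for p
    proof -
      have "{q\<in>fst (lo_rev (triple_order n A)). blk q = blk p \<and> (q, p) \<in> snd (lo_rev (triple_order n A))} =
          {q\<in>out_dom n A. blk q = blk p \<and> out_less A p q}"
        using that by (auto simp: lo_rev_def)
      then show ?thesis using block_successors_finite that by (simp add: lo_rev_def)
    qed
  qed
qed (use blk_mono in simp)

end

lemma omega_copies_of_lo_iso:
  assumes "is_lo A" and "lo_iso A omega_times_2"
  obtains part pos where "omega_copies A part pos"
proof -
  obtain part pos :: "nat \<Rightarrow> nat" where "\<And>x. x \<in> fst A \<Longrightarrow> part x < 2"
    and "\<And>x y. x \<in> fst A \<Longrightarrow> y \<in> fst A \<Longrightarrow>
      (x, y) \<in> snd A \<longleftrightarrow> part x < part y \<or> (part x = part y \<and> (pos x, pos y) \<in> snd omega)"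
    and "\<And>x y. x \<in> fst A \<Longrightarrow> y \<in> fst A \<Longrightarrow> part x = part y \<Longrightarrow> pos x = pos y \<Longrightarrow> x = y"
    and "\<And>s m. s < 2 \<Longrightarrow> \<exists>x\<in>fst A. part x = s \<and> pos x = m"
    using lo_iso_lo_mult_2_coords[OF assms(2)] by (auto simp: omega_def)
  then have "omega_copies A part pos"
    using assms(1) by unfold_locales (auto simp: omega_def)
  then show ?thesis by (rule that)
qed

lemma omega_star_copies_of_lo_iso:
  assumes "is_lo A" and "lo_iso A omega_star_times_2"
  obtains part pos where "omega_star_copies A part pos"
proof -
  obtain part pos :: "nat \<Rightarrow> nat" where "\<And>x. x \<in> fst A \<Longrightarrow> part x < 2"
    and "\<And>x y. x \<in> fst A \<Longrightarrow> y \<in> fst A \<Longrightarrow>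
      (x, y) \<in> snd A \<longleftrightarrow> part x < part y \<or> (part x = part y \<and> (pos x, pos y) \<in> snd (lo_rev omega))"
    and "\<And>x y. x \<in> fst A \<Longrightarrow> y \<in> fst A \<Longrightarrow> part x = part y \<Longrightarrow> pos x = pos y \<Longrightarrow> x = y"
    and "\<And>s m. s < 2 \<Longrightarrow> \<exists>x\<in>fst A. part x = s \<and> pos x = m"
    using lo_iso_lo_mult_2_coords[OF assms(2)] by (auto simp: omega_def lo_rev_def)
  then have "omega_star_copies A part pos"
    using assms(1) by unfold_locales (auto simp: omega_def lo_rev_def)
  then show ?thesis by (rule that)
qed

lemma lo_iso_out_order_omega_sq_times:
  assumes "is_lo A" and "lo_iso A omega_times_2"
  shows "lo_iso (out_order n A) (omega_sq_times n)"
proof -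
  obtain part pos where "omega_copies A part pos"
    using omega_copies_of_lo_iso[OF assms] .
  then show ?thesis
    using lo_iso_trans[OF lo_iso_sym[OF lo_iso_out_order] omega_copies.lo_iso_triple_order] by blast
qed

lemma lo_iso_out_order_omega_sq_star_times:
  assumes "is_lo A" and "lo_iso A omega_star_times_2"
  shows "lo_iso (out_order n A) (omega_sq_star_times n)"
proof -
  obtain part pos where "omega_star_copies A part pos"
    using omega_star_copies_of_lo_iso[OF assms] .
  then show ?thesis
    using lo_iso_trans[OF lo_iso_sym[OF lo_iso_out_order] omega_star_copies.lo_iso_triple_order] by blast
qed

lemma lo_iso_iff_has_least_iff:
  assumes M: "has_least M" and M': "\<not> has_least M'"
    and L: "L \<in> cls2 M M'" and L': "L' \<in> cls2 M M'"
  shows "lo_iso L L' \<longleftrightarrow> (has_least L \<longleftrightarrow> has_least L')"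
proof -
  have least_iff: "has_least K \<longleftrightarrow> lo_iso K M" if "K \<in> cls2 M M'" for K
  proof
    assume "has_least K"
    then show "lo_iso K M"
      using that M' has_least_lo_iso[of K M'] unfolding cls2_def by blast
  qed (use M has_least_lo_iso lo_iso_sym in blast)
  show ?thesis
  proof
    assume "lo_iso L L'"
    then show "has_least L \<longleftrightarrow> has_least L'"
      using has_least_lo_iso[of L L'] has_least_lo_iso[of L' L] lo_iso_sym[of L L'] by blast
  next
    assume "has_least L \<longleftrightarrow> has_least L'"
    then have "(lo_iso L M \<and> lo_iso L' M) \<or> (lo_iso L M' \<and> lo_iso L' M')"
      using least_iff[OF L] least_iff[OF L'] L L' unfolding cls2_def by blast
    then show "lo_iso L L'"
      using lo_iso_trans[OF _ lo_iso_sym] by blast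
  qed
qed

lemma out_order_in_cls2:
  assumes "A \<in> cls2 omega_times_2 omega_star_times_2"
  shows "out_order n A \<in> cls2 (omega_sq_times n) (omega_sq_star_times n)"
proof -
  have lo: "is_lo A" and cases: "lo_iso A omega_times_2 \<or> lo_iso A omega_star_times_2"
    using assms(1) unfolding cls2_def by auto
  then have "lo_iso (out_order n A) (omega_sq_times n) \<or> lo_iso (out_order n A) (omega_sq_star_times n)"
    using lo_iso_out_order_omega_sq_times lo_iso_out_order_omega_sq_star_times by blast
  then show ?thesis
    using is_lo_out_order[OF lo] unfolding cls2_def by blast
qed

lemma has_least_out_order_iff:
  assumes "A \<in> cls2 omega_times_2 omega_star_times_2" and "1 \<le> n"
  shows "has_least (out_order n A) \<longleftrightarrow> has_least A"
proof -
  have lo: "is_lo A" and cases: "lo_iso A omega_times_2 \<or> lo_iso A omega_star_times_2"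
    using assms(1) unfolding cls2_def by auto
  from cases show ?thesis
  proof
    assume "lo_iso A omega_times_2"
    then have "has_least A" "has_least (out_order n A)"
      using lo_iso_out_order_omega_sq_times[OF lo] has_least_omega_times_2
        has_least_omega_sq_times[OF assms(2)] has_least_lo_iso[OF lo_iso_sym] by blast+
    then show ?thesis by simp
  next
    assume "lo_iso A omega_star_times_2"
    then have "\<not> has_least A" "\<not> has_least (out_order n A)"
      using lo_iso_out_order_omega_sq_star_times[OF lo] not_has_least_omega_star_times_2
        not_has_least_omega_sq_star_times has_least_lo_iso by metis+
    then show ?thesis by simp
  qed
qed

theorem corollary3p4:
  fixes n :: nat
  assumes "n \<ge> 1"
  shows "cls2 (lo_mult omega (fin_ord 2)) (lo_mult (lo_rev omega) (fin_ord 2))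
     \<le>\<^sub>c cls2 (lo_mult (lo_mult omega omega) (fin_ord n))
               (lo_mult (lo_rev (lo_mult omega omega)) (fin_ord n))"
  unfolding comp_emb_def
proof (intro exI[of _ "Gamma n"] conjI ballI impI)
  show "enum_op (Gamma n)" using enum_op_Gamma assms .
  fix A assume A: "A \<in> cls2 omega_times_2 omega_star_times_2"
  then show "\<exists>B\<in>cls2 (omega_sq_times n) (omega_sq_star_times n). enum_apply (Gamma n) (diag A) = diag B"
    using out_order_in_cls2 enum_apply_Gamma_diag unfolding cls2_def by blast
  fix A' B B' assume A': "A' \<in> cls2 omega_times_2 omega_star_times_2"
    and B: "B \<in> cls2 (omega_sq_times n) (omega_sq_star_times n)"
    and B': "B' \<in> cls2 (omega_sq_times n) (omega_sq_star_times n)"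
    and "enum_apply (Gamma n) (diag A) = diag B" "enum_apply (Gamma n) (diag A') = diag B'"
  then have "B = out_order n A" "B' = out_order n A'"
    using A eq_out_order_of_enum_apply_Gamma unfolding cls2_def by auto
  then show "lo_iso A A' \<longleftrightarrow> lo_iso B B'"
    using has_least_out_order_iff[OF A assms] has_least_out_order_iff[OF A' assms]
      lo_iso_iff_has_least_iff[OF has_least_omega_times_2 not_has_least_omega_star_times_2 A A']
      lo_iso_iff_has_least_iff[OF has_least_omega_sq_times[OF assms] not_has_least_omega_sq_star_times B B']
    by simp
qed

end
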